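(* Let $\Lambda\in\mathcal H$ be of integral type and let $\tilde\Lambda\in\mathcal H$ be of $\Lambda$-integral type, with associated left coideal subalgebra $\mathcal A_{\tilde\Lambda}$ and homomorphism $\pi:\mathcal A_{\tilde\Lambda}\to\mathcal H$. Then for every $a\in\mathcal A_{\tilde\Lambda}$, $$(1\otimes a)\Delta(\tilde\Lambda)=(S(\pi(a))\otimes 1)\Delta(\tilde\Lambda).$$ Moreover: (1) $\mathcal V_{\tilde\Lambda}\subset\mathcal A_{\tilde\Lambda}$, and $\mathcal V_{\tilde\Lambda}$ is a left ideal of $\mathcal A_{\tilde\Lambda}$ which is faithful as a left $\mathcal A_{\tilde\Lambda}$-module (i.e. if $a\in\mathcal A_{\tilde\Lambda}$ and $av=0$ for all $v\in\mathcal V_{\tilde\Lambda}$ then $a=0$); (2) $\dim\mathcal A_{\tilde\Lambda}<\infty$; (3) ${}_{\tilde\Lambda}\mathcal V$ is a right $\mathcal A_{\tilde\Lambda}$-module via $x\cdot a:=S(\pi(a))x$ for $a\in\mathcal A_{\tilde\Lambda}$, $x\in{}_{\tilde\Lambda}\mathcal V$; (4) the linear map $U:\mathcal V_{\tilde\Lambda}'\to{}_{\tilde\Lambda}\mathcal V$, $U(\nu)=(\mathrm{id}\otimes\nu)(\Delta(\tilde\Lambda))$, is an isomorphism of right $\mathcal A_{\tilde\Lambda}$-modules, where $\mathcal V_{\tilde\Lambda}'$ carries the right module structure $(\nu\cdot a)(v)=\nu(av)$; (5) $\tilde\Lambda$ is non-degenerate if and only if $\mathcal V_{\tilde\Lambda}=\mathcal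 A_{\tilde\Lambda}$.
   Context: $k$ is a field; $\mathcal H$ is a Hopf algebra over $k$ with comultiplication $\Delta$, counit $\varepsilon$, invertible antipode $S$, and $\mathcal H'$ denotes its linear dual. A left coideal is a subspace $V\subset\mathcal H$ with $\Delta(V)\subset\mathcal H\otimes V$; a left coideal subalgebra is a subalgebra containing $1$ which is a left coideal. For $\Lambda\in\mathcal H$ put $\mathcal V_\Lambda=\{(\nu\otimes\mathrm{id})\Delta(\Lambda):\nu\in\mathcal H'\}$ and ${}_\Lambda\mathcal V=\{(\mathrm{id}\otimes\nu)\Delta(\Lambda):\nu\in\mathcal H'\}$. A non-zero $\Lambda\in\mathcal H$ is of integral type if $\Delta(\Lambda)(1\otimes\Lambda)=\Lambda\otimes\Lambda$. For $\Lambda$ of integral type, a non-zero $\tilde\Lambda\in\mathcal H$ is of $\Lambda$-integral type if $\Delta(\tilde\Lambda)(1\otimes\tilde\Lambda)=\Lambda\otimes\tilde\Lambda$; it is called non-degenerate if $1\in\mathcal V_{\tilde\Lambda}$. For such $\tilde\Lambda$, $\mathcal A_{\tilde\Lambda}=\{a\in\mathcal H:\ \Delta(a)(1\otimes\tilde\Lambda)=b\otimes\tilde\Lambda\text{ for some }b\in\mathcal H\}$; this is a left coideal subalgebra, the element $b$ is uniquely determined by $a$ and denoted $\pi(a)$, and $\pi:\mathcal A_{\tilde\Lambda}\to\mathcal H$ is an injective algebra homomorphism. *)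

theory Defs
  imports Main "HOL.Vector_Spaces"
begin

text \<open>
The Hopf algebra H is a type 'h :: ring_1
(the algebra multiplication and unit) together with a scalar multiplication
sc :: 'k \<Rightarrow> 'h \<Rightarrow> 'h making it a k-algebra.
Elements of H \<otimes> H (resp. H \<otimes> H \<otimes> H) are represented by finite formal sums, i.e. lists of
pairs (resp. triples); two formal sums denote the same tensor iff they agree under all
functionals phi \<otimes> psi (resp. phi \<otimes> psi \<otimes> chi) with phi, psi, chi in the linear dual H'.
This is exactly equality in the algebraic tensor product over a field.
\<close>

definition lin_fun :: "('k::field \<Rightarrow> 'h::ring_1 \<Rightarrow> 'h) \<Rightarrow> ('h \<Rightarrow> 'k) \<Rightarrow> bool" where
  "lin_fun sc \<phi> \<longleftrightarrow> Vector_Spaces.linear sc (*) \<phi>"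

definition teq2 :: "('k::field \<Rightarrow> 'h::ring_1 \<Rightarrow> 'h) \<Rightarrow> ('h \<times> 'h) list \<Rightarrow> ('h \<times> 'h) list \<Rightarrow> bool" where
  "teq2 sc t u \<longleftrightarrow> (\<forall>\<phi> \<psi>. lin_fun sc \<phi> \<longrightarrow> lin_fun sc \<psi> \<longrightarrow>
      (\<Sum>(x,y)\<leftarrow>t. \<phi> x * \<psi> y) = (\<Sum>(x,y)\<leftarrow>u. \<phi> x * \<psi> y))"

definition teq3 :: "('k::field \<Rightarrow> 'h::ring_1 \<Rightarrow> 'h) \<Rightarrow> ('h \<times> 'h \<times> 'h) list \<Rightarrow> ('h \<times> 'h \<times> 'h) list \<Rightarrow> bool" where
  "teq3 sc t u \<longleftrightarrow> (\<forall>\<phi> \<psi> \<chi>. lin_fun sc \<phi> \<longrightarrow> lin_fun sc \<psi> \<longrightarrow> lin_fun sc \<chi> \<longrightarrow>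
      (\<Sum>(x,y,z)\<leftarrow>t. \<phi> x * \<psi> y * \<chi> z) = (\<Sum>(x,y,z)\<leftarrow>u. \<phi> x * \<psi> y * \<chi> z))"

definition tmul :: "('h::ring_1 \<times> 'h) list \<Rightarrow> ('h \<times> 'h) list \<Rightarrow> ('h \<times> 'h) list" where
  "tmul t u = concat (map (\<lambda>(a,b). map (\<lambda>(c,d). (a * c, b * d)) u) t)"

definition hopf_algebra ::
  "('k::field \<Rightarrow> 'h::ring_1 \<Rightarrow> 'h) \<Rightarrow> ('h \<Rightarrow> ('h \<times> 'h) list) \<Rightarrow> ('h \<Rightarrow> 'k) \<Rightarrow> ('h \<Rightarrow> 'h) \<Rightarrow> bool" where
  "hopf_algebra sc \<Delta> \<epsilon> S \<longleftrightarrow>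
     \<comment> \<open>H is a k-algebra\<close>
     vector_space sc \<and>
     (\<forall>c x y. sc c (x * y) = sc c x * y) \<and>
     (\<forall>c x y. sc c (x * y) = x * sc c y) \<and>
     \<comment> \<open>comultiplication: linear, multiplicative, unital, coassociative\<close>
     (\<forall>x y. teq2 sc (\<Delta> (x + y)) (\<Delta> x @ \<Delta> y)) \<and>
     (\<forall>c x. teq2 sc (\<Delta> (sc c x)) (map (\<lambda>(a,b). (sc c a, b)) (\<Delta> x))) \<and>
     (\<forall>x y. teq2 sc (\<Delta> (x * y)) (tmul (\<Delta> x) (\<Delta> y))) \<and>
     teq2 sc (\<Delta> 1) [(1,1)] \<and>
     (\<forall>x. teq3 sc (concat (map (\<lambda>(a,b). map (\<lambda>(p,q). (p,q,b)) (\<Delta> a)) (\<Delta> x)))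
                   (concat (map (\<lambda>(a,b). map (\<lambda>(p,q). (a,p,q)) (\<Delta> b)) (\<Delta> x)))) \<and>
     \<comment> \<open>counit: linear, multiplicative, unital, counit axioms\<close>
     lin_fun sc \<epsilon> \<and> (\<forall>x y. \<epsilon> (x * y) = \<epsilon> x * \<epsilon> y) \<and> \<epsilon> 1 = 1 \<and>
     (\<forall>x. (\<Sum>(a,b)\<leftarrow>\<Delta> x. sc (\<epsilon> a) b) = x) \<and>
     (\<forall>x. (\<Sum>(a,b)\<leftarrow>\<Delta> x. sc (\<epsilon> b) a) = x) \<and>
     \<comment> \<open>antipode: linear, antipode axioms, invertible\<close>
     Vector_Spaces.linear sc sc S \<and>
     (\<forall>x. (\<Sum>(a,b)\<leftarrow>\<Delta> x. S a * b) = sc (\<epsilon> x) 1) \<and>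
     (\<forall>x. (\<Sum>(a,b)\<leftarrow>\<Delta> x. a * S b) = sc (\<epsilon> x) 1) \<and>
     bij S"

text \<open>V_Lambda = {(nu \<otimes> id) Delta(Lambda)} and _Lambda V = {(id \<otimes> nu) Delta(Lambda)}.\<close>
definition Vr :: "('k::field \<Rightarrow> 'h::ring_1 \<Rightarrow> 'h) \<Rightarrow> ('h \<Rightarrow> ('h \<times> 'h) list) \<Rightarrow> 'h \<Rightarrow> 'h set" where
  "Vr sc \<Delta> \<Lambda> = {(\<Sum>(a,b)\<leftarrow>\<Delta> \<Lambda>. sc (\<nu> a) b) | \<nu>. lin_fun sc \<nu>}"

definition Vl :: "('k::field \<Rightarrow> 'h::ring_1 \<Rightarrow> 'h) \<Rightarrow> ('h \<Rightarrow> ('h \<times> 'h) list) \<Rightarrow> 'h \<Rightarrow> 'h set" where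
  "Vl sc \<Delta> \<Lambda> = {(\<Sum>(a,b)\<leftarrow>\<Delta> \<Lambda>. sc (\<nu> b) a) | \<nu>. lin_fun sc \<nu>}"

definition integral_type :: "('k::field \<Rightarrow> 'h::ring_1 \<Rightarrow> 'h) \<Rightarrow> ('h \<Rightarrow> ('h \<times> 'h) list) \<Rightarrow> 'h \<Rightarrow> bool" where
  "integral_type sc \<Delta> \<Lambda> \<longleftrightarrow> \<Lambda> \<noteq> 0 \<and> teq2 sc (tmul (\<Delta> \<Lambda>) [(1, \<Lambda>)]) [(\<Lambda>, \<Lambda>)]"

definition rel_integral_type :: "('k::field \<Rightarrow> 'h::ring_1 \<Rightarrow> 'h) \<Rightarrow> ('h \<Rightarrow> ('h \<times> 'h) list) \<Rightarrow> 'h \<Rightarrow> 'h \<Rightarrow> bool" where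
  "rel_integral_type sc \<Delta> \<Lambda> \<Lambda>t \<longleftrightarrow> \<Lambda>t \<noteq> 0 \<and> teq2 sc (tmul (\<Delta> \<Lambda>t) [(1, \<Lambda>t)]) [(\<Lambda>, \<Lambda>t)]"

definition non_degenerate :: "('k::field \<Rightarrow> 'h::ring_1 \<Rightarrow> 'h) \<Rightarrow> ('h \<Rightarrow> ('h \<times> 'h) list) \<Rightarrow> 'h \<Rightarrow> bool" where
  "non_degenerate sc \<Delta> \<Lambda>t \<longleftrightarrow> 1 \<in> Vr sc \<Delta> \<Lambda>t"

definition Aset :: "('k::field \<Rightarrow> 'h::ring_1 \<Rightarrow> 'h) \<Rightarrow> ('h \<Rightarrow> ('h \<times> 'h) list) \<Rightarrow> 'h \<Rightarrow> 'h set" where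
  "Aset sc \<Delta> \<Lambda>t = {a. \<exists>b. teq2 sc (tmul (\<Delta> a) [(1, \<Lambda>t)]) [(b, \<Lambda>t)]}"

definition piA :: "('k::field \<Rightarrow> 'h::ring_1 \<Rightarrow> 'h) \<Rightarrow> ('h \<Rightarrow> ('h \<times> 'h) list) \<Rightarrow> 'h \<Rightarrow> 'h \<Rightarrow> 'h" where
  "piA sc \<Delta> \<Lambda>t a = (THE b. teq2 sc (tmul (\<Delta> a) [(1, \<Lambda>t)]) [(b, \<Lambda>t)])"

text \<open>The linear dual V' of a subspace V, represented extensionally (functions vanishing off V).\<close>
definition dual_on :: "('k::field \<Rightarrow> 'h::ring_1 \<Rightarrow> 'h) \<Rightarrow> 'h set \<Rightarrow> ('h \<Rightarrow> 'k) set" where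
  "dual_on sc V = {\<nu>. (\<forall>x\<in>V. \<forall>y\<in>V. \<nu> (x + y) = \<nu> x + \<nu> y) \<and>
                      (\<forall>c. \<forall>x\<in>V. \<nu> (sc c x) = c * \<nu> x) \<and> (\<forall>x. x \<notin> V \<longrightarrow> \<nu> x = 0)}"

definition dual_act :: "'h set \<Rightarrow> ('h::ring_1 \<Rightarrow> 'k::field) \<Rightarrow> 'h \<Rightarrow> 'h \<Rightarrow> 'k" where
  "dual_act V \<nu> a = (\<lambda>v. if v \<in> V then \<nu> (a * v) else 0)"

text \<open>U(nu) = (id \<otimes> nu) Delta(Lambda~), computed with any linear extension of nu to H
  (the value does not depend on the extension since Delta(Lambda~) lies in H \<otimes> V_Lambda~).\<close>
definition Umap :: "('k::field \<Rightarrow> 'h::ring_1 \<Rightarrow> 'h) \<Rightarrow> ('h \<Rightarrow> ('h \<times> 'h) list) \<Rightarrow> 'h \<Rightarrow> ('h \<Rightarrow> 'k) \<Rightarrow> 'h" where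
  "Umap sc \<Delta> \<Lambda>t \<nu> =
     (let \<nu>' = (SOME \<nu>'. lin_fun sc \<nu>' \<and> (\<forall>v\<in>Vr sc \<Delta> \<Lambda>t. \<nu>' v = \<nu> v))
      in (\<Sum>(a,b)\<leftarrow>\<Delta> \<Lambda>t. sc (\<nu>' b) a))"

end

theory Submission
  imports Defs
begin

text \<open>
Elements of H \<otimes> H are only observed through the functionals \<phi> \<otimes> \<psi>; expanding in a basis of H,
a tensor identity may then be tested against arbitrary bilinear forms (trilinear ones for
coassociativity).

The heart of the proof is the slide identity (1 \<otimes> a)\<Delta>(\<Lambda>~) = (S(\<pi> a) \<otimes> 1)\<Delta>(\<Lambda>~). It comes from
evaluating \<Delta>(a)(1 \<otimes> \<Lambda>~) = \<pi>(a) \<otimes> \<Lambda>~ on the form (x, y) \<mapsto> (\<phi> \<otimes> \<psi>)((S x \<otimes> 1)\<Delta>(y)), where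
coassociativity and the antipode axiom S(x1) x2 = \<epsilon>(x) 1 collapse the left-hand side. Read in
the second leg it makes V_\<Lambda>~ a left ideal of \<A>; read in the first leg it gives the action
x \<mapsto> S(\<pi> a) x on _\<Lambda>~V, which U intertwines with the dual action. V_\<Lambda>~ \<subseteq> \<A> follows from
coassociativity and \<Delta>(\<Lambda>~)(1 \<otimes> \<Lambda>~) = \<Lambda> \<otimes> \<Lambda>~. The element a is recovered from \<pi>(a) through
(id \<otimes> S)\<Delta>, and S(\<pi> a) from the left legs of (S(\<pi> a) \<otimes> 1)\<Delta>(\<Lambda>~) through the other antipode
axiom; this gives injectivity of \<pi>, faithfulness of V_\<Lambda>~, and, since the slide identity
confines S(\<pi> a) to a fixed finite-dimensional space, dim \<A> < \<infinity>.
\<close>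

lemma additive_sum_list:
  assumes "\<And>x y. f (x + y) = f x + f y" "f 0 = 0"
  shows "f (\<Sum>x\<leftarrow>xs. g x) = (\<Sum>x\<leftarrow>xs. f (g x))"
  by (induction xs) (auto simp: assms)

lemma sum_list_swap:
  fixes f :: "'a \<Rightarrow> 'b \<Rightarrow> 'c::comm_monoid_add"
  shows "(\<Sum>x\<leftarrow>xs. \<Sum>y\<leftarrow>ys. f x y) = (\<Sum>y\<leftarrow>ys. \<Sum>x\<leftarrow>xs. f x y)"
  by (induction xs) (auto simp: sum_list_addf)

lemma sum_list_sum_swap:
  fixes f :: "'a \<Rightarrow> 'b \<Rightarrow> 'c::comm_monoid_add"
  shows "(\<Sum>x\<leftarrow>xs. \<Sum>y\<in>E. f x y) = (\<Sum>y\<in>E. \<Sum>x\<leftarrow>xs. f x y)"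
  by (induction xs) (auto simp: sum.distrib)

lemma sum_list_concat_map:
  "(\<Sum>x\<leftarrow>concat (map g xs). f x) = (\<Sum>y\<leftarrow>xs. \<Sum>x\<leftarrow>g y. f x)"
  by (induction xs) auto

lemma tmul_singleton_right: "tmul t [(c,d)] = map (\<lambda>(a,b). (a*c, b*d)) t"
  unfolding tmul_def by (induction t) auto

lemma tmul_singleton_left: "tmul [(c,d)] t = map (\<lambda>(a,b). (c*a, d*b)) t"
  unfolding tmul_def by (auto simp: case_prod_unfold)

lemma teq2_sym: "teq2 sc t u \<Longrightarrow> teq2 sc u t"
  unfolding teq2_def by simp

lemma teq2_trans: "teq2 sc t u \<Longrightarrow> teq2 sc u v \<Longrightarrow> teq2 sc t v"
  unfolding teq2_def by simp

section \<open>Linear functionals on a Hopf algebra\<close>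

locale hopf_alg =
  fixes sc :: "'k::field \<Rightarrow> 'h::ring_1 \<Rightarrow> 'h"
    and \<Delta> :: "'h \<Rightarrow> ('h \<times> 'h) list" and \<epsilon> :: "'h \<Rightarrow> 'k" and S :: "'h \<Rightarrow> 'h"
  assumes hopf_algebra: "hopf_algebra sc \<Delta> \<epsilon> S"
begin

lemma vector_space_H: "vector_space sc"
  using hopf_algebra unfolding hopf_algebra_def by blast

sublocale vector_space sc by (rule vector_space_H)

lemma vector_space_field: "vector_space ((*) :: 'k \<Rightarrow> 'k \<Rightarrow> 'k)"
  by unfold_locales (auto simp: algebra_simps)

abbreviation lin :: "('h \<Rightarrow> 'k) \<Rightarrow> bool" where "lin \<equiv> lin_fun sc"
abbreviation lin_op :: "('h \<Rightarrow> 'h) \<Rightarrow> bool" where "lin_op \<equiv> Vector_Spaces.linear sc sc"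

lemma lin_iff: "lin f \<longleftrightarrow> (\<forall>x y. f (x + y) = f x + f y) \<and> (\<forall>c x. f (sc c x) = c * f x)"
  unfolding lin_fun_def linear_iff using vector_space_H vector_space_field by auto

lemma lin_op_iff: "lin_op f \<longleftrightarrow> (\<forall>x y. f (x + y) = f x + f y) \<and> (\<forall>c x. f (sc c x) = sc c (f x))"
  unfolding linear_iff using vector_space_H by auto

lemma linI: "(\<And>x y. f (x + y) = f x + f y) \<Longrightarrow> (\<And>c x. f (sc c x) = c * f x) \<Longrightarrow> lin f"
  by (simp add: lin_iff)

lemma lin_opI: "(\<And>x y. f (x + y) = f x + f y) \<Longrightarrow> (\<And>c x. f (sc c x) = sc c (f x)) \<Longrightarrow> lin_op f"
  by (simp add: lin_op_iff)

lemma lin_add: "lin f \<Longrightarrow> f (x + y) = f x + f y" by (simp add: lin_iff)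
lemma lin_scale: "lin f \<Longrightarrow> f (sc c x) = c * f x" by (simp add: lin_iff)
lemma lin_zero: "lin f \<Longrightarrow> f 0 = 0" using lin_scale[of f 0 0] by simp
lemma lin_diff: "lin f \<Longrightarrow> f (x - y) = f x - f y"
  using lin_add[of f "x - y" y] by (simp add: eq_diff_eq)
lemma lin_sum_list: "lin f \<Longrightarrow> f (\<Sum>x\<leftarrow>xs. g x) = (\<Sum>x\<leftarrow>xs. f (g x))"
  by (rule additive_sum_list) (auto simp: lin_add lin_zero)
lemma lin_sum: "lin f \<Longrightarrow> f (\<Sum>x\<in>E. g x) = (\<Sum>x\<in>E. f (g x))"
  by (induction E rule: infinite_finite_induct) (auto simp: lin_add lin_zero)

lemma lin_op_add: "lin_op f \<Longrightarrow> f (x + y) = f x + f y" by (simp add: lin_op_iff)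
lemma lin_op_scale: "lin_op f \<Longrightarrow> f (sc c x) = sc c (f x)" by (simp add: lin_op_iff)
lemma lin_op_zero: "lin_op f \<Longrightarrow> f 0 = 0" using lin_op_scale[of f 0 0] by simp
lemma lin_op_sum_list: "lin_op f \<Longrightarrow> f (\<Sum>x\<leftarrow>xs. g x) = (\<Sum>x\<leftarrow>xs. f (g x))"
  by (rule additive_sum_list) (auto simp: lin_op_add lin_op_zero)

lemma scale_mult_left: "sc c (x * y) = sc c x * y"
  using hopf_algebra unfolding hopf_algebra_def by blast
lemma scale_mult_right: "sc c (x * y) = x * sc c y"
  using hopf_algebra unfolding hopf_algebra_def by blast

lemma lin_comp: "lin f \<Longrightarrow> lin_op g \<Longrightarrow> lin (\<lambda>x. f (g x))"
  by (simp add: lin_iff lin_op_iff)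
lemma lin_op_comp: "lin_op f \<Longrightarrow> lin_op g \<Longrightarrow> lin_op (\<lambda>x. f (g x))"
  by (simp add: lin_op_iff)
lemma lin_op_mult_left: "lin_op (\<lambda>x. a * x)"
  by (rule lin_opI) (auto simp: distrib_left scale_mult_right)
lemma lin_op_mult_right: "lin_op (\<lambda>x. x * a)"
  by (rule lin_opI) (auto simp: distrib_right scale_mult_left)
lemma lin_op_antipode: "lin_op S"
  using hopf_algebra unfolding hopf_algebra_def by blast

lemma lin_mult_left: "lin \<phi> \<Longrightarrow> lin (\<lambda>x. \<phi> (a * x))"
  using lin_comp lin_op_mult_left by blast
lemma lin_mult_right: "lin \<phi> \<Longrightarrow> lin (\<lambda>x. \<phi> (x * a))"
  using lin_comp lin_op_mult_right by blast
lemma lin_antipode: "lin \<phi> \<Longrightarrow> lin (\<lambda>x. \<phi> (S x))"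
  using lin_comp lin_op_antipode by blast

lemma lin_mult_const: "lin f \<Longrightarrow> lin (\<lambda>x. f x * c)"
  by (simp add: lin_iff algebra_simps)
lemma lin_const_mult: "lin f \<Longrightarrow> lin (\<lambda>x. c * f x)"
  by (simp add: lin_iff algebra_simps)
lemma lin_sum_listI: "(\<And>i. i \<in> set xs \<Longrightarrow> lin (f i)) \<Longrightarrow> lin (\<lambda>x. \<Sum>i\<leftarrow>xs. f i x)"
  by (induction xs) (auto simp: lin_iff algebra_simps sum_list_addf sum_list_const_mult)

lemma lin_sum_list_mult_left: "lin \<phi> \<Longrightarrow> \<phi> (p * (\<Sum>i\<leftarrow>l. f i)) = (\<Sum>i\<leftarrow>l. \<phi> (p * f i))"
  by (simp add: sum_list_const_mult[symmetric] lin_sum_list)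
lemma lin_sum_list_mult_right: "lin \<phi> \<Longrightarrow> \<phi> ((\<Sum>i\<leftarrow>l. f i) * p) = (\<Sum>i\<leftarrow>l. \<phi> (f i * p))"
  by (simp add: sum_list_mult_const[symmetric] lin_sum_list)

definition coord :: "'h \<Rightarrow> 'h \<Rightarrow> 'k" where
  "coord v b = representation (extend_basis {}) v b"

lemma basis_H: "independent (extend_basis {})" "span (extend_basis {}) = UNIV"
  using independent_extend_basis[OF independent_empty] span_extend_basis[OF independent_empty]
  by auto

lemma lin_coord: "lin (\<lambda>v. coord v b)"
  unfolding lin_fun_def coord_def by (rule linear_representation[OF basis_H])

lemma coord_expansion:
  assumes "finite E" "{b. coord v b \<noteq> 0} \<subseteq> E"
  shows "(\<Sum>b\<in>E. sc (coord v b) b) = v"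
proof -
  have "(\<Sum>b\<in>E. sc (coord v b) b) = (\<Sum>b | coord v b \<noteq> 0. sc (coord v b) b)"
    by (rule sum.mono_neutral_right) (use assms in auto)
  also have "\<dots> = v"
    unfolding coord_def using basis_H by (intro sum_nonzero_representation_eq) auto
  finally show ?thesis .
qed

lemma common_coord_expansion:
  assumes "finite X"
  obtains E where "finite E" "\<And>x. x \<in> X \<Longrightarrow> x = (\<Sum>e\<in>E. sc (coord x e) e)"
proof -
  define E where "E = (\<Union>x\<in>X. {b. coord x b \<noteq> 0})"
  have "finite E"
    unfolding E_def coord_def using assms finite_representation by auto
  moreover have "x = (\<Sum>e\<in>E. sc (coord x e) e)" if "x \<in> X" for x
    using coord_expansion[of E x, symmetric] \<open>finite E\<close> that unfolding E_def by auto
  ultimately show ?thesis using that by blast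
qed

lemma lin_coord_expansion:
  assumes "lin f" "x = (\<Sum>e\<in>E. sc (coord x e) e)"
  shows "f x = (\<Sum>e\<in>E. coord x e * f e)"
  by (subst assms(2)) (simp add: lin_sum[OF assms(1)] lin_scale[OF assms(1)])

lemma functionals_separate:
  assumes "\<And>f. lin f \<Longrightarrow> f x = f y"
  shows "x = y"
proof (rule ccontr)
  assume "x \<noteq> y"
  obtain b where b: "coord (x - y) b \<noteq> 0"
  proof (rule ccontr)
    assume "\<not> thesis"
    then have "{b. coord (x - y) b \<noteq> 0} \<subseteq> {}" using that by blast
    then show False using coord_expansion[of "{}" "x - y"] \<open>x \<noteq> y\<close> by simp
  qed
  have "coord (x - y) b = coord x b - coord y b" using lin_diff[OF lin_coord] by blast
  also have "\<dots> = 0" using assms[OF lin_coord[of b]] by simp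
  finally show False using b by simp
qed

lemma functional_one:
  assumes "x \<noteq> 0"
  obtains f where "lin f" "f x = 1"
proof -
  have "\<not> (\<forall>f. lin f \<longrightarrow> f x = f 0)" using functionals_separate[of x 0] assms by blast
  then obtain g where g: "lin g" "g x \<noteq> 0" using lin_zero by force
  show ?thesis using that[of "\<lambda>v. g v / g x"] g
    by (simp add: lin_iff add_divide_distrib)
qed

definition bilin :: "('h \<Rightarrow> 'h \<Rightarrow> 'k) \<Rightarrow> bool" where
  "bilin F \<longleftrightarrow> (\<forall>y. lin (\<lambda>x. F x y)) \<and> (\<forall>x. lin (\<lambda>y. F x y))"

definition trilin :: "('h \<Rightarrow> 'h \<Rightarrow> 'h \<Rightarrow> 'k) \<Rightarrow> bool" where
  "trilin G \<longleftrightarrow> (\<forall>y z. lin (\<lambda>x. G x y z)) \<and> (\<forall>x z. lin (\<lambda>y. G x y z)) \<and> (\<forall>x y. lin (\<lambda>z. G x y z))"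

lemma bilinI: "(\<And>y. lin (\<lambda>x. F x y)) \<Longrightarrow> (\<And>x. lin (\<lambda>y. F x y)) \<Longrightarrow> bilin F"
  by (simp add: bilin_def)
lemma bilin_left: "bilin F \<Longrightarrow> lin (\<lambda>x. F x y)" by (simp add: bilin_def)
lemma bilin_right: "bilin F \<Longrightarrow> lin (\<lambda>y. F x y)" by (simp add: bilin_def)
lemma bilin_prod: "lin f \<Longrightarrow> lin g \<Longrightarrow> bilin (\<lambda>x y. f x * g y)"
  by (intro bilinI lin_mult_const lin_const_mult)

lemma trilinI:
  "(\<And>y z. lin (\<lambda>x. G x y z)) \<Longrightarrow> (\<And>x z. lin (\<lambda>y. G x y z)) \<Longrightarrow> (\<And>x y. lin (\<lambda>z. G x y z))
   \<Longrightarrow> trilin G"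
  by (simp add: trilin_def)

lemma teq2_bilinear:
  assumes t: "teq2 sc t u" and F: "bilin F"
  shows "(\<Sum>(x,y)\<leftarrow>t. F x y) = (\<Sum>(x,y)\<leftarrow>u. F x y)"
proof -
  obtain E where E: "finite E" "\<And>x. x \<in> fst ` set (t @ u) \<Longrightarrow> x = (\<Sum>e\<in>E. sc (coord x e) e)"
    using common_coord_expansion[of "fst ` set (t @ u)"] by blast
  have expand: "(\<Sum>(x,y)\<leftarrow>l. F x y) = (\<Sum>e\<in>E. \<Sum>(x,y)\<leftarrow>l. coord x e * F e y)"
    if "set l \<subseteq> set (t @ u)" for l
  proof -
    have "(\<Sum>(x,y)\<leftarrow>l. F x y) = (\<Sum>(x,y)\<leftarrow>l. \<Sum>e\<in>E. coord x e * F e y)"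
    proof (rule arg_cong[where f = sum_list], rule map_cong[OF refl], clarify)
      fix x y assume "(x, y) \<in> set l"
      then have "x \<in> fst ` set (t @ u)" using that by force
      then show "F x y = (\<Sum>e\<in>E. coord x e * F e y)"
        using lin_coord_expansion[of "\<lambda>x. F x y" x E] F E(2) unfolding bilin_def by simp
    qed
    also have "\<dots> = (\<Sum>e\<in>E. \<Sum>(x,y)\<leftarrow>l. coord x e * F e y)"
      using sum_list_sum_swap[where f="\<lambda>p e. case p of (x,y) \<Rightarrow> coord x e * F e y" and xs=l]
      by (simp add: case_prod_unfold)
    finally show ?thesis .
  qed
  have "(\<Sum>(x,y)\<leftarrow>t. coord x e * F e y) = (\<Sum>(x,y)\<leftarrow>u. coord x e * F e y)" for e
    using t lin_coord[of e] F unfolding teq2_def bilin_def by blast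
  then show ?thesis using expand[where l=t] expand[where l=u] by simp
qed

lemma teq3_trilinear:
  assumes t: "teq3 sc t u" and G: "trilin G"
  shows "(\<Sum>(x,y,z)\<leftarrow>t. G x y z) = (\<Sum>(x,y,z)\<leftarrow>u. G x y z)"
proof -
  let ?X = "fst ` set (t @ u) \<union> (fst \<circ> snd) ` set (t @ u)"
  obtain E where E: "finite E" "\<And>x. x \<in> ?X \<Longrightarrow> x = (\<Sum>e\<in>E. sc (coord x e) e)"
    using common_coord_expansion[of ?X] by blast
  have expand: "(\<Sum>(x,y,z)\<leftarrow>l. G x y z)
      = (\<Sum>e\<in>E. \<Sum>f\<in>E. \<Sum>(x,y,z)\<leftarrow>l. coord x e * coord y f * G e f z)"
    if "set l \<subseteq> set (t @ u)" for l
  proof -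
    have "(\<Sum>(x,y,z)\<leftarrow>l. G x y z) = (\<Sum>(x,y,z)\<leftarrow>l. \<Sum>e\<in>E. \<Sum>f\<in>E. coord x e * coord y f * G e f z)"
    proof (rule arg_cong[where f = sum_list], rule map_cong[OF refl], clarify)
      fix x y z assume xyz: "(x, y, z) \<in> set l"
      have x: "x \<in> ?X" and y: "y \<in> ?X" using xyz that by force+
      have "G x y z = (\<Sum>e\<in>E. coord x e * G e y z)"
        using lin_coord_expansion[of "\<lambda>x. G x y z" x E] G E(2)[OF x] unfolding trilin_def by simp
      also have "\<dots> = (\<Sum>e\<in>E. coord x e * (\<Sum>f\<in>E. coord y f * G e f z))"
        using lin_coord_expansion[of "\<lambda>y. G _ y z" y E] G E(2)[OF y] unfolding trilin_def by simp
      finally show "G x y z = (\<Sum>e\<in>E. \<Sum>f\<in>E. coord x e * coord y f * G e f z)"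
        by (simp add: sum_distrib_left mult.assoc)
    qed
    also have "\<dots> = (\<Sum>e\<in>E. \<Sum>(x,y,z)\<leftarrow>l. \<Sum>f\<in>E. coord x e * coord y f * G e f z)"
      using sum_list_sum_swap[where f="\<lambda>p e. case p of (x,y,z) \<Rightarrow> \<Sum>f\<in>E. coord x e * coord y f * G e f z"
          and xs=l]
      by (simp add: case_prod_unfold)
    also have "\<dots> = (\<Sum>e\<in>E. \<Sum>f\<in>E. \<Sum>(x,y,z)\<leftarrow>l. coord x e * coord y f * G e f z)"
      by (rule sum.cong[OF refl])
         (use sum_list_sum_swap[where f="\<lambda>p f. case p of (x,y,z) \<Rightarrow> coord x _ * coord y f * G _ f z"
            and xs=l] in \<open>simp add: case_prod_unfold\<close>)
    finally show ?thesis .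
  qed
  have "(\<Sum>(x,y,z)\<leftarrow>t. coord x e * coord y f * G e f z) = (\<Sum>(x,y,z)\<leftarrow>u. coord x e * coord y f * G e f z)"
    for e f
    using t lin_coord[of e] lin_coord[of f] G unfolding teq3_def trilin_def by blast
  then show ?thesis using expand[where l=t] expand[where l=u] by simp
qed

lemma hopf_axioms:
  "\<And>x y. teq2 sc (\<Delta> (x + y)) (\<Delta> x @ \<Delta> y)"
  "\<And>c x. teq2 sc (\<Delta> (sc c x)) (map (\<lambda>(a,b). (sc c a, b)) (\<Delta> x))"
  "\<And>x y. teq2 sc (\<Delta> (x * y)) (tmul (\<Delta> x) (\<Delta> y))"
  "teq2 sc (\<Delta> 1) [(1,1)]"
  "\<And>x. teq3 sc (concat (map (\<lambda>(a,b). map (\<lambda>(p,q). (p,q,b)) (\<Delta> a)) (\<Delta> x)))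
                 (concat (map (\<lambda>(a,b). map (\<lambda>(p,q). (a,p,q)) (\<Delta> b)) (\<Delta> x)))"
  "\<And>x. (\<Sum>(a,b)\<leftarrow>\<Delta> x. sc (\<epsilon> a) b) = x"
  "\<And>x. (\<Sum>(a,b)\<leftarrow>\<Delta> x. sc (\<epsilon> b) a) = x"
  "\<And>x. (\<Sum>(a,b)\<leftarrow>\<Delta> x. S a * b) = sc (\<epsilon> x) 1"
  "\<And>x. (\<Sum>(a,b)\<leftarrow>\<Delta> x. a * S b) = sc (\<epsilon> x) 1"
  "bij S"
  using hopf_algebra unfolding hopf_algebra_def by blast+

lemmas counit_left = hopf_axioms(6) and counit_right = hopf_axioms(7)
  and antipode_left = hopf_axioms(8) and antipode_right = hopf_axioms(9)
  and bij_antipode = hopf_axioms(10)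

lemma lin_sum_Delta:
  assumes "bilin F"
  shows "lin (\<lambda>x. \<Sum>(a,b)\<leftarrow>\<Delta> x. F a b)"
proof (rule linI)
  fix x y
  show "(\<Sum>(a,b)\<leftarrow>\<Delta> (x + y). F a b) = (\<Sum>(a,b)\<leftarrow>\<Delta> x. F a b) + (\<Sum>(a,b)\<leftarrow>\<Delta> y. F a b)"
    using teq2_bilinear[OF hopf_axioms(1) assms, of x y] by simp
next
  fix c x
  have "(\<Sum>(a,b)\<leftarrow>\<Delta> (sc c x). F a b) = (\<Sum>(a,b)\<leftarrow>map (\<lambda>(a,b). (sc c a, b)) (\<Delta> x). F a b)"
    using teq2_bilinear[OF hopf_axioms(2) assms, of c x] by simp
  also have "\<dots> = (\<Sum>(a,b)\<leftarrow>\<Delta> x. c * F a b)"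
    using lin_scale[OF bilin_left[OF assms]] by (simp add: case_prod_unfold o_def)
  finally show "(\<Sum>(a,b)\<leftarrow>\<Delta> (sc c x). F a b) = c * (\<Sum>(a,b)\<leftarrow>\<Delta> x. F a b)"
    by (simp add: sum_list_const_mult[symmetric] case_prod_unfold)
qed

lemma lin_op_sum_Delta:
  assumes "\<And>f. lin f \<Longrightarrow> bilin (\<lambda>u1 u2. f (B u1 u2))"
  shows "lin_op (\<lambda>z. \<Sum>(u1,u2)\<leftarrow>\<Delta> z. B u1 u2)"
proof (rule lin_opI)
  fix x y
  show "(\<Sum>(u1,u2)\<leftarrow>\<Delta> (x+y). B u1 u2) = (\<Sum>(u1,u2)\<leftarrow>\<Delta> x. B u1 u2) + (\<Sum>(u1,u2)\<leftarrow>\<Delta> y. B u1 u2)"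
  proof (rule functionals_separate)
    fix f assume f: "lin f"
    show "f (\<Sum>(u1,u2)\<leftarrow>\<Delta> (x+y). B u1 u2) = f ((\<Sum>(u1,u2)\<leftarrow>\<Delta> x. B u1 u2) + (\<Sum>(u1,u2)\<leftarrow>\<Delta> y. B u1 u2))"
      using lin_add[OF lin_sum_Delta[OF assms[OF f]], of x y]
      by (simp add: lin_add[OF f] lin_sum_list[OF f] case_prod_unfold)
  qed
next
  fix c x
  show "(\<Sum>(u1,u2)\<leftarrow>\<Delta> (sc c x). B u1 u2) = sc c (\<Sum>(u1,u2)\<leftarrow>\<Delta> x. B u1 u2)"
  proof (rule functionals_separate)
    fix f assume f: "lin f"
    show "f (\<Sum>(u1,u2)\<leftarrow>\<Delta> (sc c x). B u1 u2) = f (sc c (\<Sum>(u1,u2)\<leftarrow>\<Delta> x. B u1 u2))"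
      using lin_scale[OF lin_sum_Delta[OF assms[OF f]], of c x]
      by (simp add: lin_scale[OF f] lin_sum_list[OF f] case_prod_unfold)
  qed
qed

lemma sum_Delta_mult:
  assumes "bilin F"
  shows "(\<Sum>(a,b)\<leftarrow>\<Delta> (x * y). F a b) = (\<Sum>(a,b)\<leftarrow>\<Delta> x. \<Sum>(c,d)\<leftarrow>\<Delta> y. F (a*c) (b*d))"
  using teq2_bilinear[OF hopf_axioms(3) assms, of x y]
  by (simp add: tmul_def sum_list_concat_map case_prod_unfold o_def)

lemma sum_Delta_one:
  assumes "bilin F"
  shows "(\<Sum>(a,b)\<leftarrow>\<Delta> 1. F a b) = F 1 1"
  using teq2_bilinear[OF hopf_axioms(4) assms] by simp

lemma sum_Delta_coassoc:
  assumes "trilin G"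
  shows "(\<Sum>(a,b)\<leftarrow>\<Delta> x. \<Sum>(p,q)\<leftarrow>\<Delta> a. G p q b) = (\<Sum>(a,b)\<leftarrow>\<Delta> x. \<Sum>(p,q)\<leftarrow>\<Delta> b. G a p q)"
  using teq3_trilinear[OF hopf_axioms(5) assms, of x]
  by (simp add: sum_list_concat_map case_prod_unfold o_def)

lemma sum_Delta_antipode_left_mult:
  assumes "lin \<phi>"
  shows "(\<Sum>(x1,x2)\<leftarrow>\<Delta> x. \<phi> (S x1 * (x2 * p))) = \<epsilon> x * \<phi> p"
proof -
  have "(\<Sum>(x1,x2)\<leftarrow>\<Delta> x. \<phi> (S x1 * (x2 * p))) = \<phi> ((\<Sum>(x1,x2)\<leftarrow>\<Delta> x. S x1 * x2) * p)"
    by (simp add: lin_sum_list_mult_right[OF assms] case_prod_unfold mult.assoc)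
  then show ?thesis by (simp add: antipode_left lin_scale[OF assms] scale_mult_left[symmetric])
qed

lemma lin_op_inv_antipode: "lin_op (inv S)"
proof (rule lin_opI)
  have inj: "inj S" and SS: "\<And>y. S (inv S y) = y"
    using bij_antipode by (auto simp: bij_is_inj bij_is_surj surj_f_inv_f)
  show "inv S (x + y) = inv S x + inv S y" for x y
    by (rule injD[OF inj]) (simp add: lin_op_add[OF lin_op_antipode] SS)
  show "inv S (sc c x) = sc c (inv S x)" for c x
    by (rule injD[OF inj]) (simp add: lin_op_scale[OF lin_op_antipode] SS)
qed

lemma span_image_lin_op:
  assumes "lin_op h"
  shows "h ` span X = span (h ` X)"
  using module_hom.span_image[OF module_hom_iff_linear[THEN iffD2, OF assms]] by simp

end

section \<open>The coideal subalgebra of a relative integral\<close>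

locale relative_integral = hopf_alg sc \<Delta> \<epsilon> S for sc :: "'k::field \<Rightarrow> 'h::ring_1 \<Rightarrow> 'h" and \<Delta> \<epsilon> S +
  fixes \<Lambda> \<Lambda>t :: 'h
  assumes rel_integral: "rel_integral_type sc \<Delta> \<Lambda> \<Lambda>t"
begin

abbreviation "A \<equiv> Aset sc \<Delta> \<Lambda>t"
abbreviation "\<pi> \<equiv> piA sc \<Delta> \<Lambda>t"
abbreviation "V \<equiv> Vr sc \<Delta> \<Lambda>t"
abbreviation "W \<equiv> Vl sc \<Delta> \<Lambda>t"
abbreviation "T \<equiv> \<Delta> \<Lambda>t"

lemma Lt_nonzero: "\<Lambda>t \<noteq> 0"
  using rel_integral unfolding rel_integral_type_def by blast

lemma sum_Delta_Lt_mult_Lt: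
  assumes "bilin F"
  shows "(\<Sum>(p,q)\<leftarrow>T. F p (q*\<Lambda>t)) = F \<Lambda> \<Lambda>t"
proof -
  have "teq2 sc (map (\<lambda>(a,b). (a*1, b*\<Lambda>t)) T) [(\<Lambda>, \<Lambda>t)]"
    using rel_integral unfolding rel_integral_type_def tmul_singleton_right by blast
  from teq2_bilinear[OF this assms] show ?thesis by (simp add: case_prod_unfold o_def)
qed

lemma teq2_Lt_cancel:
  assumes "teq2 sc [(b,\<Lambda>t)] [(b',\<Lambda>t)]"
  shows "b = b'"
proof (rule functionals_separate)
  obtain g where g: "lin g" "g \<Lambda>t = 1" using functional_one[OF Lt_nonzero] by blast
  fix f assume "lin f"
  then show "f b = f b'" using assms g unfolding teq2_def by force
qed

lemma Aset_teq2_piA: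
  assumes "a \<in> A"
  shows "teq2 sc (tmul (\<Delta> a) [(1, \<Lambda>t)]) [(\<pi> a, \<Lambda>t)]"
proof -
  obtain b where b: "teq2 sc (tmul (\<Delta> a) [(1, \<Lambda>t)]) [(b, \<Lambda>t)]"
    using assms unfolding Aset_def by blast
  have "teq2 sc (tmul (\<Delta> a) [(1, \<Lambda>t)]) [(b', \<Lambda>t)] \<Longrightarrow> b' = b" for b'
    using b teq2_Lt_cancel teq2_sym teq2_trans by blast
  then have "\<pi> a = b" unfolding piA_def using b by (rule the_equality[rotated])
  then show ?thesis using b by simp
qed

lemma Aset_sum_bilinear:
  assumes "a \<in> A" "bilin F"
  shows "(\<Sum>(x,y)\<leftarrow>\<Delta> a. F x (y*\<Lambda>t)) = F (\<pi> a) \<Lambda>t"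
  using teq2_bilinear[OF Aset_teq2_piA[OF assms(1)] assms(2)] unfolding tmul_singleton_right
  by (simp add: case_prod_unfold o_def)

lemma AsetI:
  assumes "\<And>\<phi> \<psi>. lin \<phi> \<Longrightarrow> lin \<psi> \<Longrightarrow> (\<Sum>(x,y)\<leftarrow>\<Delta> a. \<phi> x * \<psi> (y*\<Lambda>t)) = \<phi> b * \<psi> \<Lambda>t"
  shows "a \<in> A" "\<pi> a = b"
proof -
  have t: "teq2 sc (tmul (\<Delta> a) [(1, \<Lambda>t)]) [(b, \<Lambda>t)]"
    unfolding teq2_def tmul_singleton_right using assms by (simp add: case_prod_unfold o_def)
  then show "a \<in> A" unfolding Aset_def by blast
  then show "\<pi> a = b" using Aset_teq2_piA t teq2_Lt_cancel teq2_sym teq2_trans by blast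
qed

lemma Aset_one: "1 \<in> A" "\<pi> 1 = 1"
proof -
  have "(\<Sum>(x,y)\<leftarrow>\<Delta> 1. \<phi> x * \<psi> (y*\<Lambda>t)) = \<phi> 1 * \<psi> \<Lambda>t" if "lin \<phi>" "lin \<psi>" for \<phi> \<psi>
    using sum_Delta_one[OF bilin_prod[OF that(1) lin_mult_right[OF that(2)]]] by simp
  from AsetI[OF this] show "1 \<in> A" "\<pi> 1 = 1" by blast+
qed

lemma Aset_add:
  assumes "a \<in> A" "b \<in> A"
  shows "a + b \<in> A" "\<pi> (a + b) = \<pi> a + \<pi> b"
proof -
  have "(\<Sum>(x,y)\<leftarrow>\<Delta> (a+b). \<phi> x * \<psi> (y*\<Lambda>t)) = \<phi> (\<pi> a + \<pi> b) * \<psi> \<Lambda>t"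
    if ph: "lin \<phi>" and ps: "lin \<psi>" for \<phi> \<psi>
  proof -
    have "(\<Sum>(x,y)\<leftarrow>\<Delta> (a+b). \<phi> x * \<psi> (y*\<Lambda>t))
        = (\<Sum>(x,y)\<leftarrow>\<Delta> a. \<phi> x * \<psi> (y*\<Lambda>t)) + (\<Sum>(x,y)\<leftarrow>\<Delta> b. \<phi> x * \<psi> (y*\<Lambda>t))"
      using lin_add[OF lin_sum_Delta[OF bilin_prod[OF ph lin_mult_right[OF ps, where a=\<Lambda>t]]], of a b] by simp
    also have "\<dots> = \<phi> (\<pi> a) * \<psi> \<Lambda>t + \<phi> (\<pi> b) * \<psi> \<Lambda>t"
      using Aset_sum_bilinear[OF _ bilin_prod[OF ph ps]] assms by simp
    finally show ?thesis using lin_add[OF ph] by (simp add: distrib_right)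
  qed
  from AsetI[OF this] show "a + b \<in> A" "\<pi> (a + b) = \<pi> a + \<pi> b" by blast+
qed

lemma Aset_scale:
  assumes "a \<in> A"
  shows "sc c a \<in> A" "\<pi> (sc c a) = sc c (\<pi> a)"
proof -
  have "(\<Sum>(x,y)\<leftarrow>\<Delta> (sc c a). \<phi> x * \<psi> (y*\<Lambda>t)) = \<phi> (sc c (\<pi> a)) * \<psi> \<Lambda>t"
    if ph: "lin \<phi>" and ps: "lin \<psi>" for \<phi> \<psi>
  proof -
    have "(\<Sum>(x,y)\<leftarrow>\<Delta> (sc c a). \<phi> x * \<psi> (y*\<Lambda>t)) = c * (\<Sum>(x,y)\<leftarrow>\<Delta> a. \<phi> x * \<psi> (y*\<Lambda>t))"
      using lin_scale[OF lin_sum_Delta[OF bilin_prod[OF ph lin_mult_right[OF ps, where a=\<Lambda>t]]], of c a] by simp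
    also have "\<dots> = c * (\<phi> (\<pi> a) * \<psi> \<Lambda>t)"
      using Aset_sum_bilinear[OF assms bilin_prod[OF ph ps]] by simp
    finally show ?thesis using lin_scale[OF ph] by (simp add: mult.assoc)
  qed
  from AsetI[OF this] show "sc c a \<in> A" "\<pi> (sc c a) = sc c (\<pi> a)" by blast+
qed

lemma Aset_mult:
  assumes "a \<in> A" "b \<in> A"
  shows "a * b \<in> A" "\<pi> (a * b) = \<pi> a * \<pi> b"
proof -
  have "(\<Sum>(x,y)\<leftarrow>\<Delta> (a*b). \<phi> x * \<psi> (y*\<Lambda>t)) = \<phi> (\<pi> a * \<pi> b) * \<psi> \<Lambda>t"
    if ph: "lin \<phi>" and ps: "lin \<psi>" for \<phi> \<psi>
  proof -
    have "(\<Sum>(x,y)\<leftarrow>\<Delta> (a*b). \<phi> x * \<psi> (y*\<Lambda>t))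
        = (\<Sum>(x1,y1)\<leftarrow>\<Delta> a. \<Sum>(x2,y2)\<leftarrow>\<Delta> b. \<phi> (x1*x2) * \<psi> (y1*y2*\<Lambda>t))"
      using sum_Delta_mult[OF bilin_prod[OF ph lin_mult_right[OF ps]]] by simp
    also have "\<dots> = (\<Sum>(x1,y1)\<leftarrow>\<Delta> a. \<phi> (x1 * \<pi> b) * \<psi> (y1*\<Lambda>t))"
    proof (rule arg_cong[where f=sum_list], rule map_cong[OF refl], clarify)
      fix x1 y1
      show "(\<Sum>(x2,y2)\<leftarrow>\<Delta> b. \<phi> (x1*x2) * \<psi> (y1*y2*\<Lambda>t)) = \<phi> (x1 * \<pi> b) * \<psi> (y1*\<Lambda>t)"
        using Aset_sum_bilinear[OF assms(2) bilin_prod[OF lin_mult_left[OF ph] lin_mult_left[OF ps]]]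
        by (simp add: mult.assoc)
    qed
    also have "\<dots> = \<phi> (\<pi> a * \<pi> b) * \<psi> \<Lambda>t"
      using Aset_sum_bilinear[OF assms(1) bilin_prod[OF lin_mult_right[OF ph] ps]] by simp
    finally show ?thesis .
  qed
  from AsetI[OF this] show "a * b \<in> A" "\<pi> (a * b) = \<pi> a * \<pi> b" by blast+
qed

subsection \<open>The slide identity\<close>

lemma Delta_Lt_slide_functionals:
  assumes a: "a \<in> A" and ph: "lin \<phi>" and ps: "lin \<psi>"
  shows "(\<Sum>(p,q)\<leftarrow>T. \<phi> p * \<psi> (a*q)) = (\<Sum>(p,q)\<leftarrow>T. \<phi> (S (\<pi> a) * p) * \<psi> q)"
proof -
  define F where "F x y = (\<Sum>(p,q)\<leftarrow>\<Delta> y. \<phi> (S x * p) * \<psi> q)" for x y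
  define G where "G x y1 y2 = (\<Sum>(p,q)\<leftarrow>T. \<phi> (S x * (y1 * p)) * \<psi> (y2 * q))" for x y1 y2
  have F: "bilin F" unfolding F_def
  proof (rule bilinI)
    fix y show "lin (\<lambda>x. \<Sum>(p,q)\<leftarrow>\<Delta> y. \<phi> (S x * p) * \<psi> q)"
      unfolding case_prod_unfold
      by (rule lin_sum_listI, rule lin_mult_const, rule lin_antipode, rule lin_mult_right[OF ph])
  next
    fix x show "lin (\<lambda>y. \<Sum>(p,q)\<leftarrow>\<Delta> y. \<phi> (S x * p) * \<psi> q)"
      by (rule lin_sum_Delta, rule bilin_prod[OF lin_mult_left[OF ph] ps])
  qed
  have G: "trilin G" unfolding G_def case_prod_unfold
    by (rule trilinI; rule lin_sum_listI)
       (auto intro!: lin_mult_const lin_const_mult lin_antipode lin_mult_right lin_mult_left ph ps)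
  have F_split: "F x (y*\<Lambda>t) = (\<Sum>(y1,y2)\<leftarrow>\<Delta> y. G x y1 y2)" for x y
    unfolding F_def G_def
    using sum_Delta_mult[OF bilin_prod[OF lin_mult_left[OF ph, where a="S x"] ps], where x=y and y="\<Lambda>t"]
    by simp
  have G_antipode: "(\<Sum>(x1,x2)\<leftarrow>\<Delta> x. G x1 x2 y) = \<epsilon> x * (\<Sum>(p,q)\<leftarrow>T. \<phi> p * \<psi> (y*q))" for x y
  proof -
    have "(\<Sum>(x1,x2)\<leftarrow>\<Delta> x. G x1 x2 y)
        = (\<Sum>(p,q)\<leftarrow>T. (\<Sum>(x1,x2)\<leftarrow>\<Delta> x. \<phi> (S x1 * (x2 * p))) * \<psi> (y * q))"
      unfolding G_def using sum_list_swap[where xs="\<Delta> x" and ys=T and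
           f="\<lambda>xx pq. \<phi> (S (fst xx) * (snd xx * fst pq)) * \<psi> (y * snd pq)"]
      by (simp add: case_prod_unfold sum_list_mult_const)
    then show ?thesis
      by (simp add: sum_Delta_antipode_left_mult[OF ph, unfolded case_prod_unfold] case_prod_unfold sum_list_const_mult mult.assoc)
  qed
  have "(\<Sum>(p,q)\<leftarrow>T. \<phi> (S (\<pi> a) * p) * \<psi> q) = F (\<pi> a) \<Lambda>t" unfolding F_def ..
  also have "\<dots> = (\<Sum>(x,y)\<leftarrow>\<Delta> a. F x (y*\<Lambda>t))" using Aset_sum_bilinear[OF a F] by simp
  also have "\<dots> = (\<Sum>(x,y)\<leftarrow>\<Delta> a. \<Sum>(y1,y2)\<leftarrow>\<Delta> y. G x y1 y2)" by (simp add: F_split)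
  also have "\<dots> = (\<Sum>(x,y)\<leftarrow>\<Delta> a. \<Sum>(x1,x2)\<leftarrow>\<Delta> x. G x1 x2 y)" using sum_Delta_coassoc[OF G, of a] by simp
  also have "\<dots> = (\<Sum>(x,y)\<leftarrow>\<Delta> a. \<epsilon> x * (\<Sum>(p,q)\<leftarrow>T. \<phi> p * \<psi> (y*q)))" by (simp add: G_antipode)
  also have "\<dots> = (\<Sum>(p,q)\<leftarrow>T. \<Sum>(x,y)\<leftarrow>\<Delta> a. \<phi> p * \<psi> (sc (\<epsilon> x) y * q))"
    using sum_list_swap[where xs="\<Delta> a" and ys=T and
           f="\<lambda>xx pq. \<phi> (fst pq) * \<psi> (sc (\<epsilon> (fst xx)) (snd xx) * snd pq)"]
    by (simp add: case_prod_unfold sum_list_const_mult[symmetric] lin_scale[OF ps]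
        scale_mult_left[symmetric] mult.left_commute)
  also have "\<dots> = (\<Sum>(p,q)\<leftarrow>T. \<phi> p * \<psi> ((\<Sum>(x,y)\<leftarrow>\<Delta> a. sc (\<epsilon> x) y) * q))"
    by (simp add: case_prod_unfold lin_sum_list_mult_right[OF ps] sum_list_const_mult)
  finally show ?thesis by (simp add: counit_left)
qed

lemma Delta_Lt_slide:
  assumes "a \<in> A"
  shows "teq2 sc (tmul [(1, a)] T) (tmul [(S (\<pi> a), 1)] T)"
  unfolding teq2_def tmul_singleton_left using Delta_Lt_slide_functionals[OF assms]
  by (simp add: case_prod_unfold o_def mult.commute)

lemma Delta_Lt_slide_bilinear:
  assumes "a \<in> A" "bilin F"
  shows "(\<Sum>(p,q)\<leftarrow>T. F p (a*q)) = (\<Sum>(p,q)\<leftarrow>T. F (S (\<pi> a) * p) q)"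
  using teq2_bilinear[OF Delta_Lt_slide[OF assms(1)] assms(2)] unfolding tmul_singleton_left
  by (simp add: case_prod_unfold o_def)

lemma Vl_slide:
  assumes "a \<in> A" "lin \<nu>"
  shows "(\<Sum>(p,q)\<leftarrow>T. sc (\<nu> (a*q)) p) = S (\<pi> a) * (\<Sum>(p,q)\<leftarrow>T. sc (\<nu> q) p)"
proof (rule functionals_separate)
  fix f assume f: "lin f"
  have "f (\<Sum>(p,q)\<leftarrow>T. sc (\<nu> (a*q)) p) = (\<Sum>(p,q)\<leftarrow>T. f p * \<nu> (a*q))"
    by (simp add: lin_sum_list[OF f] lin_scale[OF f] case_prod_unfold mult.commute)
  also have "\<dots> = (\<Sum>(p,q)\<leftarrow>T. f (S (\<pi> a) * p) * \<nu> q)"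
    by (rule Delta_Lt_slide_functionals[OF assms(1) f assms(2)])
  also have "\<dots> = f (S (\<pi> a) * (\<Sum>(p,q)\<leftarrow>T. sc (\<nu> q) p))"
    by (simp add: sum_list_const_mult[symmetric] lin_sum_list[OF f] lin_scale[OF f] case_prod_unfold
         scale_mult_right[symmetric] mult.commute)
  finally show "f (\<Sum>(p,q)\<leftarrow>T. sc (\<nu> (a*q)) p) = f (S (\<pi> a) * (\<Sum>(p,q)\<leftarrow>T. sc (\<nu> q) p))" .
qed

lemma Vr_slide:
  assumes "a \<in> A" "lin \<nu>"
  shows "a * (\<Sum>(p,q)\<leftarrow>T. sc (\<nu> p) q) = (\<Sum>(p,q)\<leftarrow>T. sc (\<nu> (S (\<pi> a) * p)) q)"
proof (rule functionals_separate)
  fix f assume f: "lin f"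
  have "f (a * (\<Sum>(p,q)\<leftarrow>T. sc (\<nu> p) q)) = (\<Sum>(p,q)\<leftarrow>T. \<nu> p * f (a*q))"
    by (simp add: sum_list_const_mult[symmetric] lin_sum_list[OF f] lin_scale[OF f] case_prod_unfold
         scale_mult_right[symmetric])
  also have "\<dots> = (\<Sum>(p,q)\<leftarrow>T. \<nu> (S (\<pi> a) * p) * f q)"
    by (rule Delta_Lt_slide_functionals[OF assms(1) assms(2) f])
  also have "\<dots> = f (\<Sum>(p,q)\<leftarrow>T. sc (\<nu> (S (\<pi> a) * p)) q)"
    by (simp add: lin_sum_list[OF f] lin_scale[OF f] case_prod_unfold)
  finally show "f (a * (\<Sum>(p,q)\<leftarrow>T. sc (\<nu> p) q)) = f (\<Sum>(p,q)\<leftarrow>T. sc (\<nu> (S (\<pi> a) * p)) q)" .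
qed

lemma Vr_iff: "v \<in> V \<longleftrightarrow> (\<exists>\<nu>. lin \<nu> \<and> v = (\<Sum>(p,q)\<leftarrow>T. sc (\<nu> p) q))"
  unfolding Vr_def by blast

lemma Vl_iff: "x \<in> W \<longleftrightarrow> (\<exists>\<nu>. lin \<nu> \<and> x = (\<Sum>(p,q)\<leftarrow>T. sc (\<nu> q) p))"
  unfolding Vl_def by blast

lemma Vr_left_ideal:
  assumes "a \<in> A" "v \<in> V"
  shows "a * v \<in> V"
proof -
  obtain \<nu> where \<nu>: "lin \<nu>" "v = (\<Sum>(p,q)\<leftarrow>T. sc (\<nu> p) q)" using assms(2) Vr_iff by blast
  show ?thesis unfolding Vr_iff \<nu>(2) Vr_slide[OF assms(1) \<nu>(1)]
    by (rule exI[of _ "\<lambda>p. \<nu> (S (\<pi> a) * p)"]) (simp add: lin_mult_left[OF \<nu>(1)])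
qed

lemma Vl_action_closed:
  assumes "a \<in> A" "x \<in> W"
  shows "S (\<pi> a) * x \<in> W"
proof -
  obtain \<nu> where \<nu>: "lin \<nu>" "x = (\<Sum>(p,q)\<leftarrow>T. sc (\<nu> q) p)" using assms(2) Vl_iff by blast
  show ?thesis unfolding Vl_iff \<nu>(2) Vl_slide[OF assms(1) \<nu>(1), symmetric]
    by (rule exI[of _ "\<lambda>q. \<nu> (a * q)"]) (simp add: lin_mult_left[OF \<nu>(1)])
qed

lemma Vr_subspace: "subspace V"
proof (unfold subspace_def, intro conjI ballI allI)
  show "0 \<in> V" unfolding Vr_iff
    by (rule exI[of _ "\<lambda>x. 0"]) (simp add: lin_iff case_prod_unfold)
next
  fix x y assume "x \<in> V" "y \<in> V"
  then obtain \<nu> \<mu> where "lin \<nu>" "x = (\<Sum>(p,q)\<leftarrow>T. sc (\<nu> p) q)" "lin \<mu>" "y = (\<Sum>(p,q)\<leftarrow>T. sc (\<mu> p) q)"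
    unfolding Vr_iff by blast
  then show "x + y \<in> V" unfolding Vr_iff
    by (intro exI[of _ "\<lambda>p. \<nu> p + \<mu> p"])
       (auto simp: lin_iff sum_list_addf[symmetric] case_prod_unfold scale_left_distrib distrib_left)
next
  fix c x assume "x \<in> V"
  then obtain \<nu> where "lin \<nu>" "x = (\<Sum>(p,q)\<leftarrow>T. sc (\<nu> p) q)" unfolding Vr_iff by blast
  then show "sc c x \<in> V" unfolding Vr_iff
    by (intro exI[of _ "\<lambda>p. c * \<nu> p"])
       (auto simp: lin_iff lin_op_sum_list[OF linear_scale_self] case_prod_unfold algebra_simps)
qed

lemma Vr_subset_Aset: "V \<subseteq> A"
proof
  fix v assume "v \<in> V"
  then obtain \<nu> where \<nu>: "lin \<nu>" "v = (\<Sum>(p,q)\<leftarrow>T. sc (\<nu> p) q)" using Vr_iff by blast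
  define w where "w = (\<Sum>(p,q)\<leftarrow>\<Delta> \<Lambda>. sc (\<nu> p) q)"
  have "(\<Sum>(x,y)\<leftarrow>\<Delta> v. \<phi> x * \<psi> (y*\<Lambda>t)) = \<phi> w * \<psi> \<Lambda>t" if ph: "lin \<phi>" and ps: "lin \<psi>" for \<phi> \<psi>
  proof -
    define L where "L z = (\<Sum>(x,y)\<leftarrow>\<Delta> z. \<phi> x * \<psi> (y*\<Lambda>t))" for z
    have L: "lin L" unfolding L_def by (rule lin_sum_Delta, rule bilin_prod[OF ph lin_mult_right[OF ps]])
    have G: "trilin (\<lambda>p q1 q2. \<nu> p * (\<phi> q1 * \<psi> (q2*\<Lambda>t)))"
      by (rule trilinI, rule lin_mult_const[OF \<nu>(1)], rule lin_const_mult[OF lin_mult_const[OF ph]],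
          rule lin_const_mult[OF lin_const_mult[OF lin_mult_right[OF ps]]])
    have F: "bilin (\<lambda>p r. (\<Sum>(p1,p2)\<leftarrow>\<Delta> p. \<nu> p1 * \<phi> p2) * \<psi> r)"
      by (rule bilin_prod[OF lin_sum_Delta[OF bilin_prod[OF \<nu>(1) ph]] ps])
    have "L v = (\<Sum>(p,q)\<leftarrow>T. \<nu> p * L q)"
      unfolding \<nu>(2) by (simp add: lin_sum_list[OF L] lin_scale[OF L] case_prod_unfold)
    also have "\<dots> = (\<Sum>(p,q)\<leftarrow>T. \<Sum>(q1,q2)\<leftarrow>\<Delta> q. \<nu> p * (\<phi> q1 * \<psi> (q2*\<Lambda>t)))"
      unfolding L_def by (simp add: sum_list_const_mult[symmetric] case_prod_unfold)
    also have "\<dots> = (\<Sum>(p,q)\<leftarrow>T. \<Sum>(p1,p2)\<leftarrow>\<Delta> p. \<nu> p1 * (\<phi> p2 * \<psi> (q*\<Lambda>t)))"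
      using sum_Delta_coassoc[OF G, of \<Lambda>t] by simp
    also have "\<dots> = (\<Sum>(p,q)\<leftarrow>T. (\<Sum>(p1,p2)\<leftarrow>\<Delta> p. \<nu> p1 * \<phi> p2) * \<psi> (q*\<Lambda>t))"
      by (simp add: sum_list_mult_const[symmetric] case_prod_unfold mult.assoc)
    also have "\<dots> = (\<Sum>(p1,p2)\<leftarrow>\<Delta> \<Lambda>. \<nu> p1 * \<phi> p2) * \<psi> \<Lambda>t"
      using sum_Delta_Lt_mult_Lt[OF F] by simp
    also have "\<dots> = \<phi> w * \<psi> \<Lambda>t"
      unfolding w_def by (simp add: lin_sum_list[OF ph] lin_scale[OF ph] case_prod_unfold)
    finally show ?thesis unfolding L_def .
  qed
  then show "v \<in> A" by (rule AsetI(1))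
qed

subsection \<open>Injectivity of \<pi>, faithfulness and finite dimension\<close>

lemma Delta_Lt_antipode_expansion:
  assumes ph: "lin \<phi>" and ps: "lin \<psi>"
  shows "\<phi> b * \<psi> \<Lambda>t = (\<Sum>(p,q)\<leftarrow>T. \<Sum>(q1,q2)\<leftarrow>\<Delta> q. \<phi> (b*p*S q1) * \<psi> q2)"
proof -
  have G: "trilin (\<lambda>p q1 q2. \<phi> (b*p*S q1) * \<psi> q2)"
  proof (rule trilinI)
    fix y z show "lin (\<lambda>x. \<phi> (b * x * S y) * \<psi> z)"
      using lin_mult_const[OF lin_mult_right[OF lin_mult_left[OF ph, where a=b], where a="S y"]]
      by (simp add: mult.assoc)
  next
    fix x z show "lin (\<lambda>y. \<phi> (b * x * S y) * \<psi> z)"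
      by (rule lin_mult_const[OF lin_antipode[OF lin_mult_left[OF ph, where a="b*x"]]])
  qed (rule lin_const_mult[OF ps])
  have "(\<Sum>(p,q)\<leftarrow>T. \<Sum>(q1,q2)\<leftarrow>\<Delta> q. \<phi> (b*p*S q1) * \<psi> q2)
      = (\<Sum>(p,q)\<leftarrow>T. \<Sum>(p1,p2)\<leftarrow>\<Delta> p. \<phi> (b*p1*S p2) * \<psi> q)"
    using sum_Delta_coassoc[OF G, of \<Lambda>t] by simp
  also have "\<dots> = (\<Sum>(p,q)\<leftarrow>T. \<phi> (b * (\<Sum>(p1,p2)\<leftarrow>\<Delta> p. p1 * S p2)) * \<psi> q)"
    by (simp add: lin_sum_list_mult_left[OF ph] sum_list_mult_const[symmetric] case_prod_unfold mult.assoc)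
  also have "\<dots> = (\<Sum>(p,q)\<leftarrow>T. \<epsilon> p * (\<phi> b * \<psi> q))"
    by (simp add: antipode_right scale_mult_right[symmetric] lin_scale[OF ph] mult.assoc)
  also have "\<dots> = \<phi> b * \<psi> (\<Sum>(p,q)\<leftarrow>T. sc (\<epsilon> p) q)"
    by (simp add: lin_sum_list[OF ps] lin_scale[OF ps] sum_list_const_mult[symmetric] case_prod_unfold
        mult.left_commute)
  finally show ?thesis by (simp add: counit_left)
qed

lemma Aset_from_piA:
  assumes a: "a \<in> A" and ph: "lin \<phi>" and ps: "lin \<psi>"
  shows "\<phi> a * \<psi> \<Lambda>t = (\<Sum>(u1,u2)\<leftarrow>\<Delta> (\<pi> a). \<phi> u1 * \<psi> (S u2 * \<Lambda>t))"
proof -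
  define P where "P r s = (\<Sum>(u1,u2)\<leftarrow>\<Delta> r. \<phi> u1 * \<psi> (S u2 * s))" for r s
  have P: "bilin P" unfolding P_def
  proof (rule bilinI)
    fix s show "lin (\<lambda>r. \<Sum>(u1,u2)\<leftarrow>\<Delta> r. \<phi> u1 * \<psi> (S u2 * s))"
      by (rule lin_sum_Delta, rule bilin_prod[OF ph lin_antipode[OF lin_mult_right[OF ps]]])
  next
    fix r show "lin (\<lambda>s. \<Sum>(u1,u2)\<leftarrow>\<Delta> r. \<phi> u1 * \<psi> (S u2 * s))"
      unfolding case_prod_unfold by (rule lin_sum_listI, rule lin_const_mult, rule lin_mult_left[OF ps])
  qed
  have G: "trilin (\<lambda>x1 x2 y. \<phi> x1 * \<psi> (S x2 * (y * \<Lambda>t)))"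
  proof (rule trilinI)
    fix y z show "lin (\<lambda>x. \<phi> x * \<psi> (S y * (z * \<Lambda>t)))"
      by (rule lin_mult_const[OF ph])
  next
    fix x z show "lin (\<lambda>y. \<phi> x * \<psi> (S y * (z * \<Lambda>t)))"
      by (rule lin_const_mult[OF lin_antipode[OF lin_mult_right[OF ps, where a="z*\<Lambda>t"]]])
  next
    fix x y show "lin (\<lambda>z. \<phi> x * \<psi> (S y * (z * \<Lambda>t)))"
      by (rule lin_const_mult, rule lin_mult_right, rule lin_mult_left[OF ps])
  qed
  have "P (\<pi> a) \<Lambda>t = (\<Sum>(x,y)\<leftarrow>\<Delta> a. P x (y*\<Lambda>t))" using Aset_sum_bilinear[OF a P] by simp
  also have "\<dots> = (\<Sum>(x,y)\<leftarrow>\<Delta> a. \<Sum>(x1,x2)\<leftarrow>\<Delta> x. \<phi> x1 * \<psi> (S x2 * (y * \<Lambda>t)))"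
    unfolding P_def ..
  also have "\<dots> = (\<Sum>(x,y)\<leftarrow>\<Delta> a. \<Sum>(y1,y2)\<leftarrow>\<Delta> y. \<phi> x * \<psi> (S y1 * (y2 * \<Lambda>t)))"
    using sum_Delta_coassoc[OF G, of a] by simp
  also have "\<dots> = (\<Sum>(x,y)\<leftarrow>\<Delta> a. \<phi> x * (\<Sum>(y1,y2)\<leftarrow>\<Delta> y. \<psi> (S y1 * (y2 * \<Lambda>t))))"
    by (simp add: sum_list_const_mult case_prod_unfold)
  also have "\<dots> = (\<Sum>(x,y)\<leftarrow>\<Delta> a. \<epsilon> y * (\<phi> x * \<psi> \<Lambda>t))"
    by (simp add: sum_Delta_antipode_left_mult[OF ps] mult.left_commute)
  also have "\<dots> = \<phi> a * \<psi> \<Lambda>t"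
    by (subst (2) counit_right[of a, symmetric])
       (simp add: lin_sum_list[OF ph] lin_scale[OF ph] sum_list_mult_const[symmetric] case_prod_unfold
         mult.assoc)
  finally show ?thesis unfolding P_def ..
qed

lemma piA_eq_zero:
  assumes "a \<in> A" "\<pi> a = 0"
  shows "a = 0"
proof (rule functionals_separate)
  obtain g where g: "lin g" "g \<Lambda>t = 1" using functional_one[OF Lt_nonzero] by blast
  fix f assume f: "lin f"
  have "lin (\<lambda>r. \<Sum>(u1,u2)\<leftarrow>\<Delta> r. f u1 * g (S u2 * \<Lambda>t))"
    by (rule lin_sum_Delta, rule bilin_prod[OF f lin_antipode[OF lin_mult_right[OF g(1)]]])
  from lin_zero[OF this] show "f a = f 0"
    using Aset_from_piA[OF assms(1) f g(1)] g(2) assms(2) lin_zero[OF f] by simp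
qed

lemma Vr_faithful:
  assumes a: "a \<in> A" and annihilates: "\<forall>v\<in>V. a * v = 0"
  shows "a = 0"
proof -
  define b where "b = S (\<pi> a)"
  have b_kills: "teq2 sc (map (\<lambda>(p,q). (b*p, q)) T) []"
    unfolding teq2_def
  proof (intro allI impI)
    fix f g assume f: "lin f" and g: "lin g"
    have "(\<Sum>(p,q)\<leftarrow>T. sc (f p) q) \<in> V" unfolding Vr_iff using f by blast
    then have "(\<Sum>(p,q)\<leftarrow>T. sc (f (b*p)) q) = 0"
      using Vr_slide[OF a f] annihilates unfolding b_def by simp
    moreover have "(\<Sum>(x,y)\<leftarrow>map (\<lambda>(p,q). (b*p, q)) T. f x * g y) = g (\<Sum>(p,q)\<leftarrow>T. sc (f (b*p)) q)"
      by (simp add: lin_sum_list[OF g] lin_scale[OF g] case_prod_unfold o_def)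
    ultimately show "(\<Sum>(x,y)\<leftarrow>map (\<lambda>(p,q). (b*p, q)) T. f x * g y) = (\<Sum>(x,y)\<leftarrow>[]. f x * g y)"
      using lin_zero[OF g] by simp
  qed
  obtain g where g: "lin g" "g \<Lambda>t = 1" using functional_one[OF Lt_nonzero] by blast
  have "b = 0"
  proof (rule functionals_separate)
    fix f assume f: "lin f"
    have F: "bilin (\<lambda>r q. \<Sum>(q1,q2)\<leftarrow>\<Delta> q. f (r * S q1) * g q2)"
    proof (rule bilinI)
      fix y show "lin (\<lambda>r. \<Sum>(q1,q2)\<leftarrow>\<Delta> y. f (r * S q1) * g q2)"
        unfolding case_prod_unfold by (rule lin_sum_listI, rule lin_mult_const, rule lin_mult_right[OF f])
    next
      fix x show "lin (\<lambda>q. \<Sum>(q1,q2)\<leftarrow>\<Delta> q. f (x * S q1) * g q2)"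
        by (rule lin_sum_Delta, rule bilin_prod[OF lin_antipode[OF lin_mult_left[OF f]] g(1)])
    qed
    have "f b = (\<Sum>(x,y)\<leftarrow>map (\<lambda>(p,q). (b*p, q)) T. \<Sum>(q1,q2)\<leftarrow>\<Delta> y. f (x * S q1) * g q2)"
      using Delta_Lt_antipode_expansion[OF f g(1), of b] g(2) by (simp add: case_prod_unfold o_def)
    also have "\<dots> = 0" using teq2_bilinear[OF b_kills F] by simp
    finally show "f b = f 0" using lin_zero[OF f] by simp
  qed
  then have "\<pi> a = 0"
    using bij_is_inj[OF bij_antipode] lin_op_zero[OF lin_op_antipode] unfolding b_def
    by (metis injD)
  then show ?thesis by (rule piA_eq_zero[OF a])
qed

lemma span_sum_list: "(\<And>x. x \<in> set l \<Longrightarrow> f x \<in> span X) \<Longrightarrow> (\<Sum>x\<leftarrow>l. f x) \<in> span X"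
  by (induction l) (auto intro: span_add span_zero)

text \<open>With g(\<Lambda>~) = 1, the slide identity expresses S(\<pi> a) through a applied to the finitely many
  vectors v_e = (coord_e \<otimes> id)\<Delta>(\<Lambda>~) of V, followed by fixed linear maps.\<close>

lemma antipode_piA_expansion:
  assumes g: "lin g" "g \<Lambda>t = 1"
    and E: "\<And>x. x \<in> fst ` set T \<Longrightarrow> x = (\<Sum>e\<in>E. sc (coord x e) e)"
    and a: "a \<in> A"
  shows "S (\<pi> a) = (\<Sum>e\<in>E. \<Sum>(r1,r2)\<leftarrow>\<Delta> (a * (\<Sum>(p,q)\<leftarrow>T. sc (coord p e) q)). sc (g r2) (e * S r1))"
proof (rule functionals_separate)
  fix f assume f: "lin f"
  define \<Psi> where "\<Psi> r q = (\<Sum>(q1,q2)\<leftarrow>\<Delta> q. f (r * S q1) * g q2)" for r q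
  have \<Psi>: "bilin \<Psi>" unfolding \<Psi>_def
  proof (rule bilinI)
    fix y show "lin (\<lambda>r. \<Sum>(q1,q2)\<leftarrow>\<Delta> y. f (r * S q1) * g q2)"
      unfolding case_prod_unfold by (rule lin_sum_listI, rule lin_mult_const, rule lin_mult_right[OF f])
  next
    fix x show "lin (\<lambda>q. \<Sum>(q1,q2)\<leftarrow>\<Delta> q. f (x * S q1) * g q2)"
      by (rule lin_sum_Delta, rule bilin_prod[OF lin_antipode[OF lin_mult_left[OF f]] g(1)])
  qed
  have "f (S (\<pi> a)) = (\<Sum>(p,q)\<leftarrow>T. \<Psi> (S (\<pi> a) * p) q)"
    using Delta_Lt_antipode_expansion[OF f g(1), of "S (\<pi> a)"] g(2) unfolding \<Psi>_def
    by (simp add: mult.assoc)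
  also have "\<dots> = (\<Sum>(p,q)\<leftarrow>T. \<Psi> p (a * q))" using Delta_Lt_slide_bilinear[OF a \<Psi>] by simp
  also have "\<dots> = (\<Sum>(p,q)\<leftarrow>T. \<Sum>e\<in>E. coord p e * \<Psi> e (a * q))"
  proof (rule arg_cong[where f=sum_list], rule map_cong[OF refl], clarify)
    fix p q assume "(p,q) \<in> set T"
    then have "p \<in> fst ` set T" by force
    then show "\<Psi> p (a * q) = (\<Sum>e\<in>E. coord p e * \<Psi> e (a * q))"
      using lin_coord_expansion[OF bilin_left[OF \<Psi>] E] by blast
  qed
  also have "\<dots> = (\<Sum>e\<in>E. \<Sum>(p,q)\<leftarrow>T. coord p e * \<Psi> e (a * q))"
    using sum_list_sum_swap[where f="\<lambda>pq e. coord (fst pq) e * \<Psi> e (a * snd pq)" and xs=T and E=E]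
    by (simp add: case_prod_unfold)
  also have "\<dots> = (\<Sum>e\<in>E. \<Psi> e (a * (\<Sum>(p,q)\<leftarrow>T. sc (coord p e) q)))"
  proof (rule sum.cong[OF refl])
    fix e
    have l: "lin (\<lambda>z. \<Psi> e (a * z))" by (rule lin_mult_left[OF bilin_right[OF \<Psi>]])
    show "(\<Sum>(p,q)\<leftarrow>T. coord p e * \<Psi> e (a * q)) = \<Psi> e (a * (\<Sum>(p,q)\<leftarrow>T. sc (coord p e) q))"
      by (simp add: lin_sum_list[OF l] lin_scale[OF l] case_prod_unfold)
  qed
  finally show "f (S (\<pi> a))
      = f (\<Sum>e\<in>E. \<Sum>(r1,r2)\<leftarrow>\<Delta> (a * (\<Sum>(p,q)\<leftarrow>T. sc (coord p e) q)). sc (g r2) (e * S r1))"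
    unfolding \<Psi>_def
    by (simp add: lin_sum[OF f] lin_sum_list[OF f] lin_scale[OF f] case_prod_unfold mult.commute)
qed

lemma antipode_piA_in_finite_span:
  obtains F0 where "finite F0" "\<And>a. a \<in> A \<Longrightarrow> S (\<pi> a) \<in> span F0"
proof -
  obtain g where g: "lin g" "g \<Lambda>t = 1" using functional_one[OF Lt_nonzero] by blast
  obtain E where E: "finite E" "\<And>x. x \<in> fst ` set T \<Longrightarrow> x = (\<Sum>e\<in>E. sc (coord x e) e)"
    using common_coord_expansion[of "fst ` set T"] by blast
  define v where "v e = (\<Sum>(p,q)\<leftarrow>T. sc (coord p e) q)" for e
  define K where "K e z = (\<Sum>(r1,r2)\<leftarrow>\<Delta> z. sc (g r2) (e * S r1))" for e z
  define Q where "Q = snd ` set T"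
  have v: "v e \<in> V" for e unfolding v_def Vr_iff using lin_coord by blast
  have K: "lin_op (K e)" for e unfolding K_def
  proof (rule lin_op_sum_Delta)
    fix f assume f: "lin f"
    show "bilin (\<lambda>u1 u2. f (sc (g u2) (e * S u1)))"
      using bilin_prod[OF lin_antipode[OF lin_mult_left[OF f, where a=e]] g(1)]
      by (simp add: lin_scale[OF f] mult.commute)
  qed
  have V_span: "V \<subseteq> span Q"
  proof
    fix x assume "x \<in> V"
    then obtain \<nu> where "x = (\<Sum>(p,q)\<leftarrow>T. sc (\<nu> p) q)" using Vr_iff by blast
    moreover have "(\<Sum>(p,q)\<leftarrow>T. sc (\<nu> p) q) \<in> span Q" unfolding Q_def case_prod_unfold
      by (rule span_sum_list, rule span_scale, rule span_base) auto
    ultimately show "x \<in> span Q" by simp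
  qed
  show ?thesis
  proof
    show "finite (\<Union>e\<in>E. K e ` Q)" unfolding Q_def using E(1) by auto
  next
    fix a assume a: "a \<in> A"
    have S_piA: "S (\<pi> a) = (\<Sum>e\<in>E. K e (a * v e))"
      unfolding K_def v_def by (rule antipode_piA_expansion[OF g E(2) a])
    show "S (\<pi> a) \<in> span (\<Union>e\<in>E. K e ` Q)" unfolding S_piA
    proof (rule span_sum)
      fix e assume e: "e \<in> E"
      have "a * v e \<in> span Q" using Vr_left_ideal[OF a v] V_span by blast
      then have "K e (a * v e) \<in> span (K e ` Q)" using span_image_lin_op[OF K] by blast
      also have "span (K e ` Q) \<subseteq> span (\<Union>e\<in>E. K e ` Q)" using e by (intro span_mono) auto
      finally show "K e (a * v e) \<in> span (\<Union>e\<in>E. K e ` Q)" .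
    qed
  qed
qed

lemma Aset_lin_op_image_piA:
  obtains K where "lin_op K" "\<And>a. a \<in> A \<Longrightarrow> a = K (\<pi> a)"
proof -
  obtain g where g: "lin g" "g \<Lambda>t = 1" using functional_one[OF Lt_nonzero] by blast
  define K where "K z = (\<Sum>(u1,u2)\<leftarrow>\<Delta> z. sc (g (S u2 * \<Lambda>t)) u1)" for z
  have "lin_op K" unfolding K_def
  proof (rule lin_op_sum_Delta)
    fix f assume f: "lin f"
    show "bilin (\<lambda>u1 u2. f (sc (g (S u2 * \<Lambda>t)) u1))"
      using bilin_prod[OF f lin_antipode[OF lin_mult_right[OF g(1), where a=\<Lambda>t]]]
      by (simp add: lin_scale[OF f] mult.commute)
  qed
  moreover have "a = K (\<pi> a)" if a: "a \<in> A" for a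
  proof (rule functionals_separate)
    fix f assume f: "lin f"
    show "f a = f (K (\<pi> a))"
      using Aset_from_piA[OF a f g(1)] g(2) unfolding K_def
      by (simp add: lin_sum_list[OF f] lin_scale[OF f] case_prod_unfold mult.commute)
  qed
  ultimately show ?thesis using that by blast
qed

lemma Aset_finite_dim: "\<exists>B. finite B \<and> A \<subseteq> span B"
proof -
  obtain F0 where F0: "finite F0" "\<And>a. a \<in> A \<Longrightarrow> S (\<pi> a) \<in> span F0"
    using antipode_piA_in_finite_span by blast
  obtain K where K: "lin_op K" "\<And>a. a \<in> A \<Longrightarrow> a = K (\<pi> a)"
    using Aset_lin_op_image_piA by blast
  define h where "h z = K (inv S z)" for z
  have h: "lin_op h" unfolding h_def by (rule lin_op_comp[OF K(1) lin_op_inv_antipode])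
  have "A \<subseteq> span (h ` F0)"
  proof
    fix a assume a: "a \<in> A"
    have "a = h (S (\<pi> a))" unfolding h_def using K(2)[OF a] bij_is_inj[OF bij_antipode] by simp
    also have "\<dots> \<in> span (h ` F0)" using F0(2)[OF a] span_image_lin_op[OF h] by blast
    finally show "a \<in> span (h ` F0)" .
  qed
  then show ?thesis using F0(1) by blast
qed

lemma Vl_action_one:
  assumes "x \<in> W"
  shows "S (\<pi> 1) * x = x"
proof -
  obtain \<nu> where \<nu>: "lin \<nu>" "x = (\<Sum>(p,q)\<leftarrow>T. sc (\<nu> q) p)" using assms Vl_iff by blast
  show ?thesis using Vl_slide[OF Aset_one(1) \<nu>(1)] \<nu>(2) by simp
qed

lemma Vl_action_mult:
  assumes a: "a \<in> A" and b: "b \<in> A" and "x \<in> W"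
  shows "S (\<pi> (a * b)) * x = S (\<pi> b) * (S (\<pi> a) * x)"
proof -
  obtain \<nu> where \<nu>: "lin \<nu>" "x = (\<Sum>(p,q)\<leftarrow>T. sc (\<nu> q) p)" using assms(3) Vl_iff by blast
  have "S (\<pi> (a * b)) * x = (\<Sum>(p,q)\<leftarrow>T. sc (\<nu> (a * b * q)) p)"
    using Vl_slide[OF Aset_mult(1)[OF a b] \<nu>(1)] \<nu>(2) by simp
  also have "\<dots> = S (\<pi> b) * (\<Sum>(p,q)\<leftarrow>T. sc (\<nu> (a * q)) p)"
    using Vl_slide[OF b lin_mult_left[OF \<nu>(1), where a=a]] by (simp add: mult.assoc)
  finally show ?thesis using Vl_slide[OF a \<nu>(1)] \<nu>(2) by simp
qed

lemma Vl_action_add: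
  assumes a: "a \<in> A" and b: "b \<in> A" and "x \<in> W"
  shows "S (\<pi> (a + b)) * x = S (\<pi> a) * x + S (\<pi> b) * x"
proof -
  obtain \<nu> where \<nu>: "lin \<nu>" "x = (\<Sum>(p,q)\<leftarrow>T. sc (\<nu> q) p)" using assms(3) Vl_iff by blast
  have "S (\<pi> (a + b)) * x = (\<Sum>(p,q)\<leftarrow>T. sc (\<nu> ((a + b) * q)) p)"
    using Vl_slide[OF Aset_add(1)[OF a b] \<nu>(1)] \<nu>(2) by simp
  also have "\<dots> = (\<Sum>(p,q)\<leftarrow>T. sc (\<nu> (a * q)) p) + (\<Sum>(p,q)\<leftarrow>T. sc (\<nu> (b * q)) p)"
    by (simp add: distrib_right lin_add[OF \<nu>(1)] scale_left_distrib sum_list_addf case_prod_unfold)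
  finally show ?thesis using Vl_slide[OF a \<nu>(1)] Vl_slide[OF b \<nu>(1)] \<nu>(2) by simp
qed

lemma Vl_action_scale:
  assumes a: "a \<in> A" and "x \<in> W"
  shows "S (\<pi> (sc c a)) * x = sc c (S (\<pi> a) * x)"
proof -
  obtain \<nu> where \<nu>: "lin \<nu>" "x = (\<Sum>(p,q)\<leftarrow>T. sc (\<nu> q) p)" using assms(2) Vl_iff by blast
  have "S (\<pi> (sc c a)) * x = (\<Sum>(p,q)\<leftarrow>T. sc (\<nu> (sc c a * q)) p)"
    using Vl_slide[OF Aset_scale(1)[OF a] \<nu>(1)] \<nu>(2) by simp
  also have "\<dots> = sc c (\<Sum>(p,q)\<leftarrow>T. sc (\<nu> (a * q)) p)"
    by (simp add: scale_mult_left[symmetric] lin_scale[OF \<nu>(1)] case_prod_unfold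
        lin_op_sum_list[OF linear_scale_self])
  finally show ?thesis using Vl_slide[OF a \<nu>(1)] \<nu>(2) by simp
qed

subsection \<open>The isomorphism U\<close>

lemma dual_on_extend:
  assumes \<nu>: "\<nu> \<in> dual_on sc V"
  obtains \<nu>' where "lin \<nu>'" "\<forall>v\<in>V. \<nu>' v = \<nu> v"
proof -
  interpret pair: vector_space_pair sc "(*) :: 'k \<Rightarrow> 'k \<Rightarrow> 'k"
    unfolding vector_space_pair_def using vector_space_H vector_space_field by blast
  obtain B where B: "B \<subseteq> V" "independent B" "V \<subseteq> span B" by (rule maximal_independent_subset)
  obtain g where g: "lin g" "\<forall>x\<in>B. g x = \<nu> x"
    using pair.linear_independent_extend[OF B(2)] unfolding lin_fun_def by blast
  have \<nu>_add: "\<nu> (x + y) = \<nu> x + \<nu> y" and \<nu>_scale: "\<nu> (sc c x) = c * \<nu> x"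
    if "x \<in> V" "y \<in> V" for x y c
    using \<nu> that unfolding dual_on_def by auto
  have "subspace {x \<in> V. g x = \<nu> x}"
    unfolding subspace_def
    using Vr_subspace subspace_0 subspace_add subspace_scale lin_zero[OF g(1)] lin_add[OF g(1)]
      lin_scale[OF g(1)] \<nu>_add \<nu>_scale[of 0 0 0] \<nu>_scale
    by auto
  then have "v \<in> {x \<in> V. g x = \<nu> x}" if "v \<in> span B" for v
    using span_subspace_induct[OF that] B g by blast
  then show ?thesis using that g(1) B(3) by blast
qed

lemma Umap_eq:
  assumes "lin \<nu>'" "\<forall>v\<in>V. \<nu>' v = \<nu> v"
  shows "Umap sc \<Delta> \<Lambda>t \<nu> = (\<Sum>(p,q)\<leftarrow>T. sc (\<nu>' q) p)"
proof -
  have U_swap: "f (\<Sum>(p,q)\<leftarrow>T. sc (\<mu> q) p) = \<mu> (\<Sum>(p,q)\<leftarrow>T. sc (f p) q)" if "lin f" "lin \<mu>" for f \<mu>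
    using that by (simp add: lin_sum_list lin_scale case_prod_unfold mult.commute)
  define \<nu>'' where "\<nu>'' = (SOME \<nu>'. lin \<nu>' \<and> (\<forall>v\<in>V. \<nu>' v = \<nu> v))"
  have \<nu>'': "lin \<nu>'' \<and> (\<forall>v\<in>V. \<nu>'' v = \<nu> v)"
    unfolding \<nu>''_def by (rule someI[of _ \<nu>']) (use assms in blast)
  have "(\<Sum>(p,q)\<leftarrow>T. sc (\<nu>'' q) p) = (\<Sum>(p,q)\<leftarrow>T. sc (\<nu>' q) p)"
  proof (rule functionals_separate)
    fix f assume f: "lin f"
    have "(\<Sum>(p,q)\<leftarrow>T. sc (f p) q) \<in> V" unfolding Vr_iff using f by blast
    then show "f (\<Sum>(p,q)\<leftarrow>T. sc (\<nu>'' q) p) = f (\<Sum>(p,q)\<leftarrow>T. sc (\<nu>' q) p)"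
      using U_swap[OF f] \<nu>'' assms by simp
  qed
  then show ?thesis unfolding Umap_def Let_def \<nu>''_def by simp
qed

lemma dual_act_closed:
  assumes \<nu>: "\<nu> \<in> dual_on sc V" and a: "a \<in> A"
  shows "dual_act V \<nu> a \<in> dual_on sc V"
proof -
  have "\<nu> (x + y) = \<nu> x + \<nu> y" "\<nu> (sc c x) = c * \<nu> x" if "x \<in> V" "y \<in> V" for x y c
    using \<nu> that unfolding dual_on_def by auto
  then show ?thesis
    unfolding dual_on_def dual_act_def
    using Vr_subspace subspace_add subspace_scale Vr_left_ideal[OF a]
    by (auto simp: distrib_left scale_mult_right[symmetric])
qed

lemma Umap_inj: "inj_on (Umap sc \<Delta> \<Lambda>t) (dual_on sc V)"
proof (rule inj_onI)
  fix \<nu> \<mu> assume \<nu>: "\<nu> \<in> dual_on sc V" and \<mu>: "\<mu> \<in> dual_on sc V"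
    and eq: "Umap sc \<Delta> \<Lambda>t \<nu> = Umap sc \<Delta> \<Lambda>t \<mu>"
  obtain \<nu>' where \<nu>': "lin \<nu>'" "\<forall>v\<in>V. \<nu>' v = \<nu> v" using dual_on_extend[OF \<nu>] by blast
  obtain \<mu>' where \<mu>': "lin \<mu>'" "\<forall>v\<in>V. \<mu>' v = \<mu> v" using dual_on_extend[OF \<mu>] by blast
  have eq': "(\<Sum>(p,q)\<leftarrow>T. sc (\<nu>' q) p) = (\<Sum>(p,q)\<leftarrow>T. sc (\<mu>' q) p)"
    using eq Umap_eq[OF \<nu>'] Umap_eq[OF \<mu>'] by simp
  have "\<nu> v = \<mu> v" if "v \<in> V" for v
  proof -
    obtain \<psi> where \<psi>: "lin \<psi>" "v = (\<Sum>(p,q)\<leftarrow>T. sc (\<psi> p) q)" using \<open>v \<in> V\<close> Vr_iff by blast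
    have "\<nu> v = \<nu>' v" using \<nu>'(2) that by simp
    also have "\<dots> = \<psi> (\<Sum>(p,q)\<leftarrow>T. sc (\<nu>' q) p)" unfolding \<psi>(2)
      by (simp add: lin_sum_list[OF \<psi>(1)] lin_scale[OF \<psi>(1)] lin_sum_list[OF \<nu>'(1)]
          lin_scale[OF \<nu>'(1)] case_prod_unfold mult.commute)
    also have "\<dots> = \<psi> (\<Sum>(p,q)\<leftarrow>T. sc (\<mu>' q) p)" unfolding eq' ..
    also have "\<dots> = \<mu>' v" unfolding \<psi>(2)
      by (simp add: lin_sum_list[OF \<psi>(1)] lin_scale[OF \<psi>(1)] lin_sum_list[OF \<mu>'(1)]
          lin_scale[OF \<mu>'(1)] case_prod_unfold mult.commute)
    also have "\<dots> = \<mu> v" using \<mu>'(2) that by simp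
    finally show ?thesis .
  qed
  moreover have "\<nu> v = \<mu> v" if "v \<notin> V" for v
    using \<nu> \<mu> that unfolding dual_on_def by auto
  ultimately show "\<nu> = \<mu>" by blast
qed

lemma Umap_image: "Umap sc \<Delta> \<Lambda>t ` dual_on sc V = W"
proof
  show "Umap sc \<Delta> \<Lambda>t ` dual_on sc V \<subseteq> W"
  proof
    fix x assume "x \<in> Umap sc \<Delta> \<Lambda>t ` dual_on sc V"
    then obtain \<nu> where \<nu>: "\<nu> \<in> dual_on sc V" "x = Umap sc \<Delta> \<Lambda>t \<nu>" by blast
    obtain \<nu>' where \<nu>': "lin \<nu>'" "\<forall>v\<in>V. \<nu>' v = \<nu> v" using dual_on_extend[OF \<nu>(1)] by blast
    show "x \<in> W" unfolding Vl_iff \<nu>(2) Umap_eq[OF \<nu>'] using \<nu>'(1) by blast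
  qed
next
  show "W \<subseteq> Umap sc \<Delta> \<Lambda>t ` dual_on sc V"
  proof
    fix x assume "x \<in> W"
    then obtain \<nu> where \<nu>: "lin \<nu>" "x = (\<Sum>(p,q)\<leftarrow>T. sc (\<nu> q) p)" using Vl_iff by blast
    define \<mu> where "\<mu> v = (if v \<in> V then \<nu> v else 0)" for v
    have "\<mu> \<in> dual_on sc V" unfolding dual_on_def \<mu>_def
      using Vr_subspace subspace_add subspace_scale lin_add[OF \<nu>(1)] lin_scale[OF \<nu>(1)] by auto
    moreover have "Umap sc \<Delta> \<Lambda>t \<mu> = x" using Umap_eq[OF \<nu>(1), of \<mu>] \<nu>(2) unfolding \<mu>_def by simp
    ultimately show "x \<in> Umap sc \<Delta> \<Lambda>t ` dual_on sc V" by blast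
  qed
qed

lemma Umap_add:
  assumes \<nu>: "\<nu> \<in> dual_on sc V" and \<mu>: "\<mu> \<in> dual_on sc V"
  shows "Umap sc \<Delta> \<Lambda>t (\<lambda>v. \<nu> v + \<mu> v) = Umap sc \<Delta> \<Lambda>t \<nu> + Umap sc \<Delta> \<Lambda>t \<mu>"
proof -
  obtain \<nu>' where \<nu>': "lin \<nu>'" "\<forall>v\<in>V. \<nu>' v = \<nu> v" using dual_on_extend[OF \<nu>] by blast
  obtain \<mu>' where \<mu>': "lin \<mu>'" "\<forall>v\<in>V. \<mu>' v = \<mu> v" using dual_on_extend[OF \<mu>] by blast
  have "lin (\<lambda>x. \<nu>' x + \<mu>' x)" using \<nu>'(1) \<mu>'(1) by (simp add: lin_iff algebra_simps)
  then have "Umap sc \<Delta> \<Lambda>t (\<lambda>v. \<nu> v + \<mu> v) = (\<Sum>(p,q)\<leftarrow>T. sc (\<nu>' q + \<mu>' q) p)"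
    by (rule Umap_eq) (use \<nu>'(2) \<mu>'(2) in simp)
  then show ?thesis
    using Umap_eq[OF \<nu>'] Umap_eq[OF \<mu>']
    by (simp add: case_prod_unfold scale_left_distrib sum_list_addf)
qed

lemma Umap_scale:
  assumes \<nu>: "\<nu> \<in> dual_on sc V"
  shows "Umap sc \<Delta> \<Lambda>t (\<lambda>v. c * \<nu> v) = sc c (Umap sc \<Delta> \<Lambda>t \<nu>)"
proof -
  obtain \<nu>' where \<nu>': "lin \<nu>'" "\<forall>v\<in>V. \<nu>' v = \<nu> v" using dual_on_extend[OF \<nu>] by blast
  have "Umap sc \<Delta> \<Lambda>t (\<lambda>v. c * \<nu> v) = (\<Sum>(p,q)\<leftarrow>T. sc (c * \<nu>' q) p)"
    by (rule Umap_eq[OF lin_const_mult[OF \<nu>'(1)]]) (use \<nu>'(2) in simp)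
  then show ?thesis
    using Umap_eq[OF \<nu>'] by (simp add: case_prod_unfold lin_op_sum_list[OF linear_scale_self])
qed

lemma Umap_dual_act:
  assumes \<nu>: "\<nu> \<in> dual_on sc V" and a: "a \<in> A"
  shows "Umap sc \<Delta> \<Lambda>t (dual_act V \<nu> a) = S (\<pi> a) * Umap sc \<Delta> \<Lambda>t \<nu>"
proof -
  obtain \<nu>' where \<nu>': "lin \<nu>'" "\<forall>v\<in>V. \<nu>' v = \<nu> v" using dual_on_extend[OF \<nu>] by blast
  have "Umap sc \<Delta> \<Lambda>t (dual_act V \<nu> a) = (\<Sum>(p,q)\<leftarrow>T. sc (\<nu>' (a * q)) p)"
    by (rule Umap_eq[OF lin_mult_left[OF \<nu>'(1)]])
       (use \<nu>'(2) Vr_left_ideal[OF a] in \<open>simp add: dual_act_def\<close>)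
  then show ?thesis using Vl_slide[OF a \<nu>'(1)] Umap_eq[OF \<nu>'] by simp
qed

lemma non_degenerate_iff_Vr_eq_Aset: "non_degenerate sc \<Delta> \<Lambda>t \<longleftrightarrow> V = A"
proof
  assume "non_degenerate sc \<Delta> \<Lambda>t"
  then have "1 \<in> V" unfolding non_degenerate_def .
  then have "A \<subseteq> V" using Vr_left_ideal by force
  then show "V = A" using Vr_subset_Aset by blast
next
  assume "V = A"
  then show "non_degenerate sc \<Delta> \<Lambda>t" unfolding non_degenerate_def using Aset_one(1) by simp
qed

end

theorem mainTheorem3:
  fixes sc :: "'k::field \<Rightarrow> 'h::ring_1 \<Rightarrow> 'h"
    and \<Delta> :: "'h \<Rightarrow> ('h \<times> 'h) list" and \<epsilon> :: "'h \<Rightarrow> 'k" and S :: "'h \<Rightarrow> 'h"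
    and \<Lambda> \<Lambda>t :: 'h
  assumes hopf: "hopf_algebra sc \<Delta> \<epsilon> S"
    and int: "integral_type sc \<Delta> \<Lambda>"
    and relint: "rel_integral_type sc \<Delta> \<Lambda> \<Lambda>t"
  defines "A \<equiv> Aset sc \<Delta> \<Lambda>t"
    and "\<pi> \<equiv> piA sc \<Delta> \<Lambda>t"
    and "V \<equiv> Vr sc \<Delta> \<Lambda>t"
    and "W \<equiv> Vl sc \<Delta> \<Lambda>t"
  shows
    "(\<forall>a\<in>A. teq2 sc (tmul [(1, a)] (\<Delta> \<Lambda>t)) (tmul [(S (\<pi> a), 1)] (\<Delta> \<Lambda>t)))
   \<and> \<comment> \<open>(1)\<close>
     (V \<subseteq> A \<and> module.subspace sc V \<and> (\<forall>a\<in>A. \<forall>v\<in>V. a * v \<in> V)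
      \<and> (\<forall>a\<in>A. (\<forall>v\<in>V. a * v = 0) \<longrightarrow> a = 0))
   \<and> \<comment> \<open>(2)\<close>
     (\<exists>B. finite B \<and> A \<subseteq> module.span sc B)
   \<and> \<comment> \<open>(3)\<close>
     ((\<forall>a\<in>A. \<forall>x\<in>W. S (\<pi> a) * x \<in> W)
      \<and> (\<forall>x\<in>W. S (\<pi> 1) * x = x)
      \<and> (\<forall>a\<in>A. \<forall>b\<in>A. \<forall>x\<in>W. S (\<pi> (a * b)) * x = S (\<pi> b) * (S (\<pi> a) * x))
      \<and> (\<forall>a\<in>A. \<forall>b\<in>A. \<forall>x\<in>W. S (\<pi> (a + b)) * x = S (\<pi> a) * x + S (\<pi> b) * x)
      \<and> (\<forall>c. \<forall>a\<in>A. \<forall>x\<in>W. S (\<pi> (sc c a)) * x = sc c (S (\<pi> a) * x))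
      \<and> (\<forall>a\<in>A. \<forall>x\<in>W. \<forall>y\<in>W. S (\<pi> a) * (x + y) = S (\<pi> a) * x + S (\<pi> a) * y)
      \<and> (\<forall>c. \<forall>a\<in>A. \<forall>x\<in>W. S (\<pi> a) * sc c x = sc c (S (\<pi> a) * x)))
   \<and> \<comment> \<open>(4)\<close>
     ((\<forall>\<nu>\<in>dual_on sc V. \<forall>a\<in>A. dual_act V \<nu> a \<in> dual_on sc V)
      \<and> bij_betw (Umap sc \<Delta> \<Lambda>t) (dual_on sc V) W
      \<and> (\<forall>\<nu>\<in>dual_on sc V. \<forall>\<mu>\<in>dual_on sc V.
            Umap sc \<Delta> \<Lambda>t (\<lambda>v. \<nu> v + \<mu> v) = Umap sc \<Delta> \<Lambda>t \<nu> + Umap sc \<Delta> \<Lambda>t \<mu>)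
      \<and> (\<forall>c. \<forall>\<nu>\<in>dual_on sc V. Umap sc \<Delta> \<Lambda>t (\<lambda>v. c * \<nu> v) = sc c (Umap sc \<Delta> \<Lambda>t \<nu>))
      \<and> (\<forall>\<nu>\<in>dual_on sc V. \<forall>a\<in>A.
            Umap sc \<Delta> \<Lambda>t (dual_act V \<nu> a) = S (\<pi> a) * Umap sc \<Delta> \<Lambda>t \<nu>))
   \<and> \<comment> \<open>(5)\<close>
     (non_degenerate sc \<Delta> \<Lambda>t \<longleftrightarrow> V = A)"
proof -
  interpret relative_integral sc \<Delta> \<epsilon> S \<Lambda> \<Lambda>t
    using hopf relint by unfold_locales
  show ?thesis
    unfolding A_def \<pi>_def V_def W_def bij_betw_def
    using Delta_Lt_slide Vr_subset_Aset Vr_subspace Vr_left_ideal Vr_faithful Aset_finite_dim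
      Vl_action_closed Vl_action_one Vl_action_mult Vl_action_add Vl_action_scale
      dual_act_closed Umap_inj Umap_image Umap_add Umap_scale Umap_dual_act
      non_degenerate_iff_Vr_eq_Aset
    by (simp add: distrib_left scale_mult_right)
qed

end
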